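(* Assume there is a unique best arm $k^*=\arg\max_k\mu_k$, let $\Delta_k=\mu_{k^*}-\mu_k$ and $\Delta=\min_{k\ne k^*}\Delta_k$, and let $\hat k(T,B)$ be the arm returned by Algorithm SRIS (described in the context) with total sample budget $T$ and cost budget $B$. Define $$\mathcal{R}^*(\Delta_k)=\Big\{s\in[K]:\Big\lfloor\log_2\Big(\frac{10}{\Delta_s}\Big)\Big\rfloor\ge\Big\lfloor\log_2\Big(\frac{10}{\Delta_k}\Big)\Big\rfloor\Big\}$$ (with $\log_2(10/0)=+\infty$), $$\bar H_k=\max_{\{l:\Delta_l\ge\Delta_k\}}\frac{\log_2(10/\Delta_l)^3}{(\Delta_l/10)^2\,v^*(B,\mathcal{R}^*(\Delta_l))^2},\qquad \bar H=\max_{k\ne k^*}\frac{\log_2(10/\Delta_k)^3}{(\Delta_k/10)^2\,v^*(B,\mathcal{R}^*(\Delta_k))^2}.$$ Then: 1. The simple regret $r(T,B)=\sum_{k\neq k^*}\Delta_k\,\mathbb{P}(\hat k(T,B)=k)$ satisfies $$r(T,B)\le 2K^2\sum_{\substack{k\ne k^*:\\ \Delta_k\ge 10/\sqrt T}}\Delta_k\log_2\Big(\frac{20}{\Delta_k}\Big)\exp\Big(-\frac{T}{2\bar H_k\,\overline{\log}(n(T))}\Big)+\frac{10}{\sqrt T}\,\mathbf{1}\big\{\exists k\ne k^*:\ \Delta_k<10/\sqrt T\big\}.$$ 2. If $\Delta_k\ge 10/\sqrt T$ for all $k\ne k^*$, the error probability $e(T,B)=\mathbb{P}(\hat k(T,B)\ne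 k^* )$ satisfies $$e(T,B)\le 2K^2\log_2(20/\Delta)\exp\Big(-\frac{T}{2\bar H\,\overline{\log}(n(T))}\Big).$$
   Context: Setting: $\mathcal{G}$ is a causal directed acyclic graph viewed as a Bayesian network. $V$ is a node with parent set $pa(V)$; $V$ and $pa(V)$ take values in finite sets. $Y$ is a node downstream of $V$ with values in $[0,1]$. There are $K$ arms indexed by $[K]=\{0,\dots,K-1\}$: under arm $k$ the conditional law of $V$ given $pa(V)$ is a known conditional distribution $\mathrm{P}_k(V\mid pa(V))$ while all other conditionals (hence the marginal law of $pa(V)$) are unchanged; these are mutually absolutely continuous. $\mu_k=\mathbb{E}_k[Y]$, expectation under arm $k$. Pulling arm $j$ yields an observation of $(Y,V,pa(V))$ from the joint law under arm $j$, independent of all other observations. Logarithms $\log$ are natural. Divergences: $D_{f_1}(\mathrm{P}_k\Vert\mathrm{P}_j)=\mathbb{E}_j[f_1(\mathrm{P}_k(V\mid pa(V))/\mathrm{P}_j(V\mid pa(V)))]$ with $f_1(x)=x\exp(x-1)-1$, and $M_{kj}=1+\log(1+D_{f_1}(\mathrm{P}_k\Vert\mathrm{P}_j))$. Budget: costs $c_i\ge0$ and cost budget $B$. For nonempty $\mathcal{R}\subseteq[K]$, $v^*(B,\mathcal{R})=\max_\nu\min_{k\in\mathcal{R}}\sum_j\nu_j/M_{kj}$ subject to $\sum_ic_i\nu_i\le B$, $\sum_j\nu_j=1$, $\nu\ge0$ (assumed feasible), with maximizer $\nu^*(B,\mathcal{R})$. Estimator: given $\tau_j$ samples from each arm $j$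 ($\mathcal{T}_j$ their indices), $Z_k=\sum_j\tau_j/M_{kj}$ and $\hat Y_k^{\epsilon}=\frac1{Z_k}\sum_j\sum_{s\in\mathcal{T}_j}\frac{1}{M_{kj}}Y_j(s)r_{kj}(s)\mathbf{1}\{r_{kj}(s)\le 2\log(2/\epsilon)M_{kj}\}$, where $r_{kj}(s)=\mathrm{P}_k(V_j(s)\mid pa(V)_j(s))/\mathrm{P}_j(V_j(s)\mid pa(V)_j(s))$. Algorithm SRIS: let $n(T)=\lceil\log_2(10\sqrt T)\rceil$, $\overline{\log}(n)=\sum_{i=1}^n 1/i$, and $\tau(l)=T/(l\,\overline{\log}(n(T)))$ (rounding ignored). Start with $\mathcal{R}=[K]$. For phases $l=1,\dots,n(T)$: allocate $\tau_j(l)=\nu^*_j(B,\mathcal{R})\tau(l)$ and pull arm $j$ $\tau_j(l)$ times; for each $k\in\mathcal{R}$ compute $\hat Y_k=\hat Y_k^{\epsilon}$ with $\epsilon=2^{-(l-1)}$ using only the samples of phase $l$; let $\hat Y_H=\max_{k\in\mathcal{R}}\hat Y_k$; remove from $\mathcal{R}$ every $k$ with $\hat Y_H>\hat Y_k+5/2^l$; if $|\mathcal{R}|=1$, return its arm. If all phases finish, return an arm chosen uniformly at random from $\mathcal{R}$. This returned arm is $\hat k(T,B)$. *)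

theory Defs
  imports "HOL-Probability.Probability"
begin

text \<open>Values of pa(V) live in the finite type 'p, values of V in the finite type 'v.
  q is the (arm-independent) law of pa(V); P k p is the conditional law of V given
  pa(V) = p under arm k; Yk v p is the (arm-independent) conditional law of Y given
  V = v, pa(V) = p.  Arms are the naturals below K.\<close>

definition arm_law ::
  "('p::finite) pmf \<Rightarrow> (nat \<Rightarrow> 'p \<Rightarrow> ('v::finite) pmf) \<Rightarrow> ('v \<Rightarrow> 'p \<Rightarrow> real measure)
   \<Rightarrow> nat \<Rightarrow> (real \<times> ('v \<times> 'p)) measure" where
  "arm_law q P Yk j =
     measure_pmf q \<bind> (\<lambda>p. measure_pmf (P j p) \<bind>
       (\<lambda>v. distr (Yk v p) (borel \<Otimes>\<^sub>M count_space UNIV) (\<lambda>y. (y, (v, p)))))"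

definition arm_mean ::
  "('p::finite) pmf \<Rightarrow> (nat \<Rightarrow> 'p \<Rightarrow> ('v::finite) pmf) \<Rightarrow> ('v \<Rightarrow> 'p \<Rightarrow> real measure)
   \<Rightarrow> nat \<Rightarrow> real" where
  "arm_mean q P Yk k = integral\<^sup>L (arm_law q P Yk k) fst"

definition f1 :: "real \<Rightarrow> real" where
  "f1 x = x * exp (x - 1) - 1"

definition Df1 :: "('p::finite) pmf \<Rightarrow> (nat \<Rightarrow> 'p \<Rightarrow> ('v::finite) pmf) \<Rightarrow> nat \<Rightarrow> nat \<Rightarrow> real" where
  "Df1 q P k j = (\<Sum>p\<in>UNIV. pmf q p * (\<Sum>v\<in>UNIV. pmf (P j p) v *
       f1 (pmf (P k p) v / pmf (P j p) v)))"

definition Mdiv :: "('p::finite) pmf \<Rightarrow> (nat \<Rightarrow> 'p \<Rightarrow> ('v::finite) pmf) \<Rightarrow> nat \<Rightarrow> nat \<Rightarrow> real" where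
  "Mdiv q P k j = 1 + ln (1 + Df1 q P k j)"

definition feasible :: "nat \<Rightarrow> (nat \<Rightarrow> real) \<Rightarrow> real \<Rightarrow> (nat \<Rightarrow> real) \<Rightarrow> bool" where
  "feasible K c B \<nu> \<longleftrightarrow> (\<forall>j<K. 0 \<le> \<nu> j) \<and> (\<Sum>j<K. \<nu> j) = 1 \<and> (\<Sum>i<K. c i * \<nu> i) \<le> B"

definition alloc_obj :: "nat \<Rightarrow> (nat \<Rightarrow> nat \<Rightarrow> real) \<Rightarrow> nat set \<Rightarrow> (nat \<Rightarrow> real) \<Rightarrow> real" where
  "alloc_obj K M R \<nu> = Min ((\<lambda>k. \<Sum>j<K. \<nu> j / M k j) ` R)"

definition vstar :: "nat \<Rightarrow> (nat \<Rightarrow> nat \<Rightarrow> real) \<Rightarrow> (nat \<Rightarrow> real) \<Rightarrow> real \<Rightarrow> nat set \<Rightarrow> real" where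
  "vstar K M c B R = (SUP \<nu>\<in>{\<nu>. feasible K c B \<nu>}. alloc_obj K M R \<nu>)"

definition is_alloc_maximizer ::
  "nat \<Rightarrow> (nat \<Rightarrow> nat \<Rightarrow> real) \<Rightarrow> (nat \<Rightarrow> real) \<Rightarrow> real \<Rightarrow> nat set \<Rightarrow> (nat \<Rightarrow> real) \<Rightarrow> bool" where
  "is_alloc_maximizer K M c B R \<nu> \<longleftrightarrow>
     feasible K c B \<nu> \<and> alloc_obj K M R \<nu> = vstar K M c B R"

definition n_phases :: "nat \<Rightarrow> nat" where
  "n_phases T = nat \<lceil>log 2 (10 * sqrt (real T))\<rceil>"

definition hlog :: "nat \<Rightarrow> real" where
  "hlog n = (\<Sum>i=1..n. 1 / real i)"

definition tau :: "nat \<Rightarrow> nat \<Rightarrow> real" where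
  "tau T l = real T / (real l * hlog (n_phases T))"

definition pulls :: "(nat \<Rightarrow> real) \<Rightarrow> nat \<Rightarrow> nat \<Rightarrow> nat \<Rightarrow> nat" where
  "pulls \<nu> T l j = nat \<lceil>\<nu> j * tau T l\<rceil>"

definition iw_ratio :: "(nat \<Rightarrow> 'p \<Rightarrow> 'v pmf) \<Rightarrow> nat \<Rightarrow> nat \<Rightarrow> real \<times> ('v \<times> 'p) \<Rightarrow> real" where
  "iw_ratio P k j x = pmf (P k (snd (snd x))) (fst (snd x)) / pmf (P j (snd (snd x))) (fst (snd x))"

text \<open>Truncated importance-sampling estimator Yhat_k^eps; the observation from arm j
  with index s is omega (j, s), for s < m j.\<close>
definition est :: "nat \<Rightarrow> (nat \<Rightarrow> nat \<Rightarrow> real) \<Rightarrow> (nat \<Rightarrow> 'p \<Rightarrow> 'v pmf) \<Rightarrow> (nat \<Rightarrow> nat)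
    \<Rightarrow> real \<Rightarrow> nat \<Rightarrow> (nat \<times> nat \<Rightarrow> real \<times> ('v \<times> 'p)) \<Rightarrow> real" where
  "est K M P m \<epsilon> k \<omega> =
     (let Z = (\<Sum>j<K. real (m j) / M k j) in
      (1 / Z) * (\<Sum>j<K. \<Sum>s<m j. (1 / M k j) * fst (\<omega> (j, s)) * iw_ratio P k j (\<omega> (j, s)) *
          (if iw_ratio P k j (\<omega> (j, s)) \<le> 2 * ln (2 / \<epsilon>) * M k j then 1 else 0)))"

definition eliminate :: "nat \<Rightarrow> nat set \<Rightarrow> (nat \<Rightarrow> real) \<Rightarrow> nat set" where
  "eliminate l R Yh = {k \<in> R. \<not> (Max (Yh ` R) > Yh k + 5 / 2 ^ l)}"

definition sris_phase ::
  "nat \<Rightarrow> ('p::finite) pmf \<Rightarrow> (nat \<Rightarrow> 'p \<Rightarrow> ('v::finite) pmf) \<Rightarrow> ('v \<Rightarrow> 'p \<Rightarrow> real measure)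
   \<Rightarrow> (nat set \<Rightarrow> nat \<Rightarrow> real) \<Rightarrow> nat \<Rightarrow> nat \<Rightarrow> nat set \<Rightarrow> nat set measure" where
  "sris_phase K q P Yk nu T l R =
     (if card R \<le> 1 then return (count_space UNIV) R
      else (let m = pulls (nu R) T l;
                I = {(j, s). j < K \<and> s < m j} in
            distr (PiM I (\<lambda>(j, s). arm_law q P Yk j)) (count_space UNIV)
              (\<lambda>\<omega>. eliminate l R (\<lambda>k. est K (Mdiv q P) P m ((1/2) ^ (l - 1)) k \<omega>))))"

primrec sris_run ::
  "nat \<Rightarrow> ('p::finite) pmf \<Rightarrow> (nat \<Rightarrow> 'p \<Rightarrow> ('v::finite) pmf) \<Rightarrow> ('v \<Rightarrow> 'p \<Rightarrow> real measure)
   \<Rightarrow> (nat set \<Rightarrow> nat \<Rightarrow> real) \<Rightarrow> nat \<Rightarrow> nat \<Rightarrow> nat set measure" where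
  "sris_run K q P Yk nu T 0 = return (count_space UNIV) {..<K}"
| "sris_run K q P Yk nu T (Suc l) =
     sris_run K q P Yk nu T l \<bind> sris_phase K q P Yk nu T (Suc l)"

definition sris_output ::
  "nat \<Rightarrow> ('p::finite) pmf \<Rightarrow> (nat \<Rightarrow> 'p \<Rightarrow> ('v::finite) pmf) \<Rightarrow> ('v \<Rightarrow> 'p \<Rightarrow> real measure)
   \<Rightarrow> (nat set \<Rightarrow> nat \<Rightarrow> real) \<Rightarrow> nat \<Rightarrow> nat measure" where
  "sris_output K q P Yk nu T =
     sris_run K q P Yk nu T (n_phases T) \<bind> (\<lambda>R. measure_pmf (pmf_of_set R))"

definition gap_level :: "real \<Rightarrow> ereal" where
  "gap_level d = (if d = 0 then \<infinity> else ereal (real_of_int \<lfloor>log 2 (10 / d)\<rfloor>))"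

definition Rstar :: "nat \<Rightarrow> (nat \<Rightarrow> real) \<Rightarrow> real \<Rightarrow> nat set" where
  "Rstar K \<Delta> d = {s. s < K \<and> gap_level (\<Delta> s) \<ge> gap_level d}"

definition Hterm :: "nat \<Rightarrow> (nat \<Rightarrow> nat \<Rightarrow> real) \<Rightarrow> (nat \<Rightarrow> real) \<Rightarrow> real \<Rightarrow> (nat \<Rightarrow> real) \<Rightarrow> nat \<Rightarrow> real" where
  "Hterm K M c B \<Delta> l =
     (log 2 (10 / \<Delta> l)) ^ 3 / ((\<Delta> l / 10) ^ 2 * (vstar K M c B (Rstar K \<Delta> (\<Delta> l))) ^ 2)"

end

theory Submission
  imports Defs
begin

text \<open>In phase \<open>l\<close> the estimate of an active arm is a truncated importance-sampling sum
  of independent terms bounded by \<open>a = 2 ln (2/\<epsilon>)\<close>. Truncation loses at most \<open>exp (1 - a)\<close>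
  of the mean: \<open>E\<^sub>j[r exp (r - 1)] = 1 + D\<^sub>f\<^sub>1 = exp (M\<^sub>k\<^sub>j - 1)\<close>, and beyond the threshold
  \<open>r \<le> r exp (r - a M\<^sub>k\<^sub>j)\<close>. A Chernoff bound on the product of the sample laws shows that
  with probability at least \<open>1 - 2K exp (-T / (2 H hlog (n(T))))\<close> all estimates of the phase
  are \<open>5/2\<^sup>l\<^sup>+\<^sup>1\<close>-accurate, so that the best arm survives and every arm with \<open>\<Delta>\<^sub>k > 10/2\<^sup>l\<close>
  is eliminated. Here \<open>H\<close> is the complexity term of the hardest arm that may still be active:
  the active set lies in its \<open>R\<^sup>*\<close>, and \<open>v\<^sup>*\<close> is antitone, so every effective sample size is
  at least \<open>\<tau>(l) v\<^sup>*(B, R\<^sup>*)\<close>. Arm \<open>k\<close> can therefore only be returned if one of the first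
  \<open>\<lfloor>log\<^sub>2 (10/\<Delta>\<^sub>k)\<rfloor> + 1\<close> phases fails; arms with \<open>\<Delta>\<^sub>k < 10/\<surd>T\<close> are never resolved but
  contribute at most \<open>10/\<surd>T\<close> to the regret in total.\<close>

lemma exp_le_one_plus_x_plus_sq:
  fixes x :: real assumes "\<bar>x\<bar> \<le> 1" shows "exp x \<le> 1 + x + x\<^sup>2"
proof (cases "x \<ge> 0")
  case True thus ?thesis using exp_bound[of x] assms by auto
next
  case False
  define y where "y = - x"
  have y: "0 \<le> y" "y \<le> 1" using False assms by (auto simp: y_def)
  have e1: "1 + y + y\<^sup>2/4 \<le> exp y"
  proof -
    have "(1 + y/2)\<^sup>2 \<le> (exp (y/2))\<^sup>2" using y by (intro power_mono exp_ge_add_one_self) auto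
    moreover have "exp y = (exp (y/2))\<^sup>2" by (simp add: power2_eq_square exp_add[symmetric])
    ultimately show ?thesis by (simp add: power2_eq_square field_simps)
  qed
  have pos: "0 < 1 - y + y\<^sup>2"
    using zero_le_power2[of "y - 1/2"] by (simp add: power2_eq_square algebra_simps)
  have "1 \<le> (1 + y + y\<^sup>2/4) * (1 - y + y\<^sup>2)"
    using y by (simp add: power2_eq_square power3_eq_cube field_simps)
  also have "\<dots> \<le> exp y * (1 - y + y\<^sup>2)" using e1 pos by (intro mult_right_mono) auto
  finally have "exp x \<le> 1 - y + y\<^sup>2" by (simp add: y_def exp_minus field_simps)
  thus ?thesis by (simp add: y_def)
qed

lemma exp_mult_le_chord:
  fixes a x \<theta> :: real assumes "0 < a" "0 \<le> x" "x \<le> a"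
  shows "exp (\<theta> * x) \<le> 1 + x * (exp (\<theta> * a) - 1) / a"
proof -
  define t where "t = x / a"
  have t: "0 \<le> t" "t \<le> 1" using assms by (auto simp: t_def)
  have "exp ((1 - t) *\<^sub>R 0 + t *\<^sub>R (\<theta>*a)) \<le> (1 - t) * exp 0 + t * exp (\<theta>*a)"
    by (rule convex_onD[OF exp_convex]) (use t in auto)
  moreover have "(1 - t) *\<^sub>R 0 + t *\<^sub>R (\<theta>*a) = \<theta> * x" using assms by (simp add: t_def)
  moreover have "(1 - t) * exp 0 + t * exp (\<theta>*a) = 1 + x * (exp (\<theta> * a) - 1) / a"
    using assms by (simp add: t_def field_simps)
  ultimately show ?thesis by metis
qed

lemma pred_cube_ge:
  fixes l :: real assumes "5 \<le> l" shows "5/2 * l\<^sup>2 \<le> (l - 1)^3"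
proof -
  have "5/2 * l\<^sup>2 \<le> 64/125 * l * l\<^sup>2" using assms by (intro mult_right_mono) auto
  also have "\<dots> = (4/5 * l)^3" by (simp add: power2_eq_square power3_eq_cube)
  also have "\<dots> \<le> (l - 1)^3" using assms by (intro power_mono) auto
  finally show ?thesis .
qed

lemma log2_ge_3:
  fixes x :: real assumes "8 \<le> x" shows "3 \<le> log 2 x"
proof -
  have "log 2 (2 ^ 3) \<le> log 2 x" using assms by (subst log_le_cancel_iff) auto
  thus ?thesis by (simp only: log_pow_cancel)
qed

lemma trunc_schedule:
  fixes l :: nat assumes "1 \<le> l"
  defines "\<epsilon> \<equiv> (1/2::real) ^ (l - 1)"
  defines "a \<equiv> 2 * ln (2 / \<epsilon>)"
  defines "t \<equiv> 5/4 * \<epsilon> - exp (1 - a)"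
  shows "a = 2 * real l * ln 2" and "t = (5/2 - exp 1 / 2^l) / 2^l"
    and "1 \<le> a" and "0 < t" and "\<epsilon> \<le> 1"
proof -
  have ul: "(2::real) ^ l = 2 * 2 ^ (l - 1)"
    using assms(1) by (metis Suc_diff_1 less_le_trans zero_less_one power_Suc)
  have eps: "\<epsilon> = 2 / 2^l" using ul by (simp add: \<epsilon>_def power_one_over)
  show a: "a = 2 * real l * ln 2" by (simp add: a_def eps ln_realpow)
  have "exp a = exp (ln (2 ^ (l * 2)))" by (simp add: a ln_realpow)
  hence "exp (1 - a) = exp 1 / (2^l)\<^sup>2" by (simp add: exp_diff power_mult)
  thus t: "t = (5/2 - exp 1 / 2^l) / 2^l"
    by (simp add: t_def eps power2_eq_square diff_divide_distrib)
  have "2 * 1 * (2/3) \<le> 2 * real l * ln 2"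
    using assms(1) ln2_ge_two_thirds by (intro mult_mono) auto
  thus "1 \<le> a" by (simp add: a)
  have "exp 1 / 2^l \<le> exp (1::real) / 2" using assms(1)
    by (intro divide_left_mono) (auto simp: self_le_power)
  thus "0 < t" using e_less_272 by (simp add: t)
  show "\<epsilon> \<le> 1" by (simp add: \<epsilon>_def power_le_one)
qed

lemma phase_exponent_arith_small:
  fixes l :: nat assumes l: "1 \<le> l" "l \<le> 4"
  shows "3 * (real l)\<^sup>2 * (2^l)\<^sup>2 \<le> (5/2 - exp 1 / 2^l)\<^sup>2 * 2700"
proof -
  define C :: real where "C = 5/2 - exp 1 / 2^l"
  have e: "exp 1 < (272/100::real)" by (rule e_less_272)
  have "exp 1 / 2^l \<le> exp (1::real) / 2" using l
    by (intro divide_left_mono) (auto simp: self_le_power)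
  hence C1: "1 \<le> C" using e unfolding C_def by linarith
  consider "l \<le> 3" | "l = 4" using l by linarith
  hence "3 * (real l)\<^sup>2 * (2^l)\<^sup>2 \<le> C\<^sup>2 * 2700"
  proof cases
    case 1
    have "(2::real)^l \<le> 2^3" using 1 by (intro power_increasing) auto
    hence "3 * (real l)\<^sup>2 * (2^l)\<^sup>2 \<le> 3 * 3\<^sup>2 * (2^3)\<^sup>2"
      using 1 by (intro mult_mono power_mono) auto
    also have "\<dots> \<le> 1 * 2700" by simp
    also have "\<dots> \<le> C\<^sup>2 * 2700" using power_mono[OF C1, of 2] by (intro mult_right_mono) auto
    finally show ?thesis .
  next
    case 2
    hence "23/10 \<le> C" using e by (simp add: C_def)
    hence "(23/10)\<^sup>2 \<le> C\<^sup>2" by (intro power_mono) auto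
    thus ?thesis using 2 by (simp add: power2_eq_square)
  qed
  thus ?thesis by (simp add: C_def)
qed

lemma phase_exponent_arith:
  fixes l :: nat and D L :: real
  assumes l: "1 \<le> l" and D: "10 \<le> D" "2^(l-1) \<le> D" and L3: "3 \<le> L" and Ll: "real l - 1 \<le> L"
  shows "4 * ln 2 * (real l)\<^sup>2 * (2^l)\<^sup>2 \<le> (5/2 - exp 1 / 2^l)\<^sup>2 * L^3 * D\<^sup>2"
proof -
  define C :: real where "C = 5/2 - exp 1 / 2^l"
  have "4 * ln 2 * (real l)\<^sup>2 * (2^l)\<^sup>2 \<le> 3 * (real l)\<^sup>2 * (2^l)\<^sup>2"
    using ln2_le_25_over_36 by (intro mult_right_mono) auto
  also have "\<dots> \<le> C\<^sup>2 * L^3 * D\<^sup>2"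
  proof (cases "l \<le> 4")
    case True
    have "27 * 100 \<le> L^3 * D\<^sup>2"
      using power_mono[OF L3, of 3] power_mono[OF D(1), of 2] L3 by (intro mult_mono) auto
    hence "C\<^sup>2 * 2700 \<le> C\<^sup>2 * (L^3 * D\<^sup>2)" by (intro mult_left_mono) auto
    thus ?thesis using phase_exponent_arith_small[OF l True] by (simp add: C_def mult.assoc)
  next
    case False
    hence l5: "5 \<le> real l" by simp
    have "(2::real)^5 \<le> 2^l" using False by (intro power_increasing) auto
    hence "exp (1::real) / 2^l \<le> exp 1 / 32" by (intro divide_left_mono) auto
    hence C: "12/5 \<le> C" using e_less_272 unfolding C_def by linarith
    hence C2: "(12/5)\<^sup>2 \<le> C\<^sup>2" by (intro power_mono) auto
    have u2: "(2::real)^l = 2 * 2^(l-1)" using l by (metis power_Suc Suc_diff_1 less_le_trans zero_less_one)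
    have "3 * (real l)\<^sup>2 * (2^l)\<^sup>2 = (12/5)\<^sup>2 * (25/12 * (real l)\<^sup>2) * (2^(l-1))\<^sup>2"
      by (simp add: u2 power2_eq_square)
    also have "\<dots> \<le> C\<^sup>2 * (real l - 1)^3 * D\<^sup>2"
    proof (intro mult_mono)
      show "25/12 * (real l)\<^sup>2 \<le> (real l - 1)^3"
        using pred_cube_ge[OF l5] zero_le_power2[of "real l"] by linarith
      show "(2^(l-1))\<^sup>2 \<le> D\<^sup>2" using D(2) by (intro power_mono) auto
    qed (use C2 l5 in auto)
    also have "\<dots> \<le> C\<^sup>2 * L^3 * D\<^sup>2"
      using Ll l5 L3 C D(1) by (intro mult_mono mult_left_mono power_mono) auto
    finally show ?thesis .
  qed
  finally show ?thesis by (simp add: C_def)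
qed

text \<open>Complexity term of an arm at the level of phase \<open>l\<close> versus the Chernoff exponent of an
  estimate with effective sample size \<open>Z \<ge> \<tau>(l) v\<close>.\<close>
lemma phase_exponent_le:
  fixes l :: nat and Dl v Z T h :: real
  assumes l: "1 \<le> l" and Dl: "0 < Dl" "Dl \<le> 1"
    and lev: "real l - 1 \<le> real_of_int \<lfloor>log 2 (10 / Dl)\<rfloor>"
    and v: "0 < v" "v \<le> 1" and T: "0 < T" and h: "0 < h"
    and Z: "T / (real l * h) * v \<le> Z"
  defines "\<epsilon> \<equiv> (1/2::real) ^ (l - 1)"
  defines "a \<equiv> 2 * ln (2 / \<epsilon>)"
  defines "t \<equiv> 5/4 * \<epsilon> - exp (1 - a)"
  shows "T / (2 * ((log 2 (10 / Dl)) ^ 3 / ((Dl / 10) ^ 2 * v ^ 2)) * h) \<le> t\<^sup>2 * Z / (4 * a)"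
proof -
  define D where "D = 10 / Dl"
  define L where "L = log 2 D"
  define u :: real where "u = 2 ^ l"
  define c where "c = 5/2 - exp 1 / u"
  have D10: "10 \<le> D" using Dl by (simp add: D_def field_simps)
  have L3: "3 \<le> L" unfolding L_def using D10 by (intro log2_ge_3) simp
  have Ll: "real l - 1 \<le> L" using lev unfolding L_def D_def by linarith
  have D2: "2^(l-1) \<le> D"
  proof -
    have "(2::real) powr (real l - 1) \<le> 2 powr L" using Ll by (intro powr_mono) auto
    thus ?thesis using D10 l by (simp add: L_def powr_realpow[symmetric] of_nat_diff)
  qed
  have key: "4 * ln 2 * (real l)\<^sup>2 * u\<^sup>2 \<le> c\<^sup>2 * L^3 * D\<^sup>2"
    unfolding u_def c_def by (rule phase_exponent_arith[OF l D10 D2 L3 Ll])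
  have aeq: "a = 2 * real l * ln 2" and teq: "t = c / u" and a1: "1 \<le> a"
    using trunc_schedule[OF l] by (simp_all add: a_def t_def \<epsilon>_def c_def u_def)
  have u2: "2 \<le> u" unfolding u_def using power_increasing[of 1 l "2::real"] l by simp
  have Lp: "0 < L" and Dp: "0 < D" and lpos: "0 < real l" using L3 D10 l by auto
  have "T / (2 * ((log 2 (10 / Dl)) ^ 3 / ((Dl / 10) ^ 2 * v ^ 2)) * h)
      = (T / h) * v\<^sup>2 * (1 / (2 * L^3 * D\<^sup>2))"
    using Dl v by (simp add: L_def D_def power_one_over field_simps)
  also have "\<dots> \<le> (T / h) * v * (1 / (2 * L^3 * D\<^sup>2))"
    using v T h Lp Dp by (intro mult_right_mono mult_left_mono) (auto simp: power2_eq_square)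
  also have "\<dots> \<le> (T / h) * v * (c\<^sup>2 / (8 * ln 2 * (real l)\<^sup>2 * u\<^sup>2))"
  proof (intro mult_left_mono)
    have "8 * ln 2 * (real l)\<^sup>2 * u\<^sup>2 \<le> c\<^sup>2 * (2 * L^3 * D\<^sup>2)" using key by linarith
    thus "1 / (2 * L^3 * D\<^sup>2) \<le> c\<^sup>2 / (8 * ln 2 * (real l)\<^sup>2 * u\<^sup>2)"
      using lpos u2 Lp Dp by (simp add: field_simps)
  qed (use T h v in auto)
  also have "\<dots> = t\<^sup>2 * (T / (real l * h) * v) / (4 * a)"
    using lpos h u2 by (simp add: teq aeq power2_eq_square field_simps)
  also have "\<dots> \<le> t\<^sup>2 * Z / (4 * a)"
    using Z a1 by (intro divide_right_mono mult_left_mono) auto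
  finally show ?thesis .
qed

subsection \<open>A Chernoff bound for bounded independent variables\<close>

lemma (in prob_space) nn_integral_exp_bounded_le:
  fixes X :: "'a \<Rightarrow> real"
  assumes X: "X \<in> borel_measurable M" and bnd: "AE x in M. 0 \<le> X x \<and> X x \<le> a" and a: "0 < a"
  shows "(\<integral>\<^sup>+x. ennreal (exp (\<theta> * X x)) \<partial>M) \<le> ennreal (exp ((exp (\<theta> * a) - 1) / a * expectation X))"
proof -
  define c where "c = (exp (\<theta> * a) - 1) / a"
  have intX: "integrable M X"
  proof (rule integrable_const_bound[where B=a])
    show "AE x in M. norm (X x) \<le> a" using bnd by (rule eventually_mono) auto
  qed (rule X)
  have chord: "AE x in M. exp (\<theta> * X x) \<le> 1 + c * X x"
    using bnd
  proof (rule eventually_mono)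
    fix x assume "0 \<le> X x \<and> X x \<le> a"
    thus "exp (\<theta> * X x) \<le> 1 + c * X x"
      using exp_mult_le_chord[OF a, of "X x" \<theta>] a by (simp add: c_def field_simps)
  qed
  have "(\<integral>\<^sup>+x. ennreal (exp (\<theta> * X x)) \<partial>M) \<le> (\<integral>\<^sup>+x. ennreal (1 + c * X x) \<partial>M)"
    using chord by (intro nn_integral_mono_AE) (auto elim!: eventually_mono intro: ennreal_leI)
  also have "\<dots> = ennreal (expectation (\<lambda>x. 1 + c * X x))"
    using chord intX
    by (intro nn_integral_eq_integral) (auto elim!: eventually_mono intro: order_trans[OF exp_ge_zero])
  also have "expectation (\<lambda>x. 1 + c * X x) = 1 + c * expectation X"
    using intX by (simp add: prob_space)
  also have "ennreal (1 + c * expectation X) \<le> ennreal (exp (c * expectation X))"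
    by (intro ennreal_leI) simp
  finally show ?thesis by (simp add: c_def)
qed

lemma exp_chord_slope_bounds:
  fixes a \<theta> :: real assumes a: "0 < a" and th: "\<bar>\<theta> * a\<bar> \<le> 1"
  shows "0 \<le> (exp (\<theta> * a) - 1) / a - \<theta>" and "(exp (\<theta> * a) - 1) / a - \<theta> \<le> \<theta>\<^sup>2 * a"
proof -
  define g where "g = exp (\<theta> * a) - 1 - \<theta> * a"
  have eq: "(exp (\<theta> * a) - 1) / a - \<theta> = g / a" using a by (simp add: g_def field_simps)
  have "0 \<le> g" using exp_ge_add_one_self[of "\<theta>*a"] unfolding g_def by linarith
  thus "0 \<le> (exp (\<theta> * a) - 1) / a - \<theta>" using a by (simp add: eq)
  have "g / a \<le> (\<theta> * a)\<^sup>2 / a"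
    using exp_le_one_plus_x_plus_sq[OF th] a by (intro divide_right_mono) (auto simp: g_def)
  thus "(exp (\<theta> * a) - 1) / a - \<theta> \<le> \<theta>\<^sup>2 * a" using a by (simp add: eq power2_eq_square)
qed

lemma chernoff_PiM:
  fixes M :: "'i \<Rightarrow> 'a measure" and X :: "'i \<Rightarrow> 'a \<Rightarrow> real" and w :: "'i \<Rightarrow> real"
  assumes prob: "\<And>i. prob_space (M i)" and fin: "finite I"
    and meas: "\<And>i. i \<in> I \<Longrightarrow> X i \<in> borel_measurable (M i)"
    and bnd: "\<And>i. i \<in> I \<Longrightarrow> AE x in M i. 0 \<le> X i x \<and> X i x \<le> a"
    and Ew: "\<And>i. i \<in> I \<Longrightarrow> integral\<^sup>L (M i) (X i) \<le> w i"
    and a: "0 < a" and th: "\<bar>\<theta> * a\<bar> \<le> 1"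
  shows "emeasure (PiM I M) {\<omega> \<in> space (PiM I M).
            \<theta> * ((\<Sum>i\<in>I. X i (\<omega> i)) - (\<Sum>i\<in>I. integral\<^sup>L (M i) (X i))) \<ge> lam}
         \<le> ennreal (exp (\<theta>\<^sup>2 * a * (\<Sum>i\<in>I. w i) - lam))"
proof -
  interpret product_prob_space M I
    by (simp add: prob product_prob_space_def product_prob_space_axioms_def
        product_sigma_finite_def prob_space_imp_sigma_finite)
  define E where "E i = integral\<^sup>L (M i) (X i)" for i
  define c where "c = (exp (\<theta> * a) - 1) / a"
  define C where "C = exp (- lam - \<theta> * (\<Sum>i\<in>I. E i))"
  have E0: "0 \<le> E i" if "i \<in> I" for i
    unfolding E_def using bnd[OF that] by (intro integral_nonneg_AE) (auto elim!: eventually_mono)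
  let ?A = "{\<omega> \<in> space (PiM I M). \<theta> * ((\<Sum>i\<in>I. X i (\<omega> i)) - (\<Sum>i\<in>I. E i)) \<ge> lam}"
  have "emeasure (PiM I M) ?A = (\<integral>\<^sup>+\<omega>. indicator ?A \<omega> \<partial>PiM I M)"
    by (rule nn_integral_indicator[symmetric]) (use meas in measurable)
  also have "\<dots> \<le> (\<integral>\<^sup>+\<omega>. ennreal C * (\<Prod>i\<in>I. ennreal (exp (\<theta> * X i (\<omega> i)))) \<partial>PiM I M)"
  proof (intro nn_integral_mono)
    fix \<omega>
    have "(\<Prod>i\<in>I. ennreal (exp (\<theta> * X i (\<omega> i)))) = ennreal (exp (\<theta> * (\<Sum>i\<in>I. X i (\<omega> i))))"
      using fin by (simp add: prod_ennreal exp_sum sum_distrib_left)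
    moreover have "C * exp (\<theta> * (\<Sum>i\<in>I. X i (\<omega> i))) = exp (\<theta> * ((\<Sum>i\<in>I. X i (\<omega> i)) - (\<Sum>i\<in>I. E i)) - lam)"
      by (simp add: C_def exp_add[symmetric] algebra_simps)
    ultimately show "indicator ?A \<omega> \<le> ennreal C * (\<Prod>i\<in>I. ennreal (exp (\<theta> * X i (\<omega> i))))"
      by (auto simp: indicator_def ennreal_mult[symmetric] C_def intro!: ennreal_leI)
  qed
  also have "\<dots> = ennreal C * (\<Prod>i\<in>I. \<integral>\<^sup>+x. ennreal (exp (\<theta> * X i x)) \<partial>M i)"
    by (subst nn_integral_cmult, use meas in measurable)
       (subst product_nn_integral_prod[OF fin], use meas in measurable)
  also have "\<dots> \<le> ennreal C * (\<Prod>i\<in>I. ennreal (exp (c * E i)))"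
    unfolding c_def E_def
    by (intro mult_left_mono prod_mono_ennreal prob_space.nn_integral_exp_bounded_le prob meas bnd a) auto
  also have "(\<Prod>i\<in>I. ennreal (exp (c * E i))) = ennreal (exp (c * (\<Sum>i\<in>I. E i)))"
    by (subst prod_ennreal) (auto simp: exp_sum[OF fin, symmetric] sum_distrib_left)
  also have "ennreal C * \<dots> = ennreal (exp ((c - \<theta>) * (\<Sum>i\<in>I. E i) - lam))"
    by (simp add: C_def ennreal_mult[symmetric] exp_add[symmetric] algebra_simps)
  also have "\<dots> \<le> ennreal (exp (\<theta>\<^sup>2 * a * (\<Sum>i\<in>I. w i) - lam))"
  proof (intro ennreal_leI exp_mono diff_right_mono)
    have cth: "0 \<le> c - \<theta>" "c - \<theta> \<le> \<theta>\<^sup>2 * a"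
      using exp_chord_slope_bounds[OF a th] by (simp_all add: c_def)
    have "(c - \<theta>) * (\<Sum>i\<in>I. E i) = (\<Sum>i\<in>I. (c - \<theta>) * E i)" by (simp add: sum_distrib_left)
    also have "\<dots> \<le> (\<Sum>i\<in>I. \<theta>\<^sup>2 * a * w i)"
      using cth E0 Ew unfolding E_def by (intro sum_mono mult_mono) (auto simp: E_def)
    also have "\<dots> = \<theta>\<^sup>2 * a * (\<Sum>i\<in>I. w i)" by (simp add: sum_distrib_left)
    finally show "(c - \<theta>) * (\<Sum>i\<in>I. E i) \<le> \<theta>\<^sup>2 * a * (\<Sum>i\<in>I. w i)" .
  qed
  finally show ?thesis by (simp add: E_def)
qed

lemma chernoff_PiM_tails:
  fixes M :: "'i \<Rightarrow> 'a measure" and X :: "'i \<Rightarrow> 'a \<Rightarrow> real" and w :: "'i \<Rightarrow> real"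
  assumes prob: "\<And>i. prob_space (M i)" and fin: "finite I"
    and meas: "\<And>i. i \<in> I \<Longrightarrow> X i \<in> borel_measurable (M i)"
    and bnd: "\<And>i. i \<in> I \<Longrightarrow> AE x in M i. 0 \<le> X i x \<and> X i x \<le> a"
    and Ew: "\<And>i. i \<in> I \<Longrightarrow> integral\<^sup>L (M i) (X i) \<le> w i"
    and a: "0 < a" and s: "0 < s" "s \<le> 2"
  defines "S \<equiv> \<lambda>\<omega>. \<Sum>i\<in>I. X i (\<omega> i)" and "ES \<equiv> \<Sum>i\<in>I. integral\<^sup>L (M i) (X i)"
    and "W \<equiv> \<Sum>i\<in>I. w i"
  shows "emeasure (PiM I M) {\<omega> \<in> space (PiM I M). s * W \<le> S \<omega> - ES} \<le> ennreal (exp (- (s\<^sup>2 * W / (4 * a))))"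
    and "emeasure (PiM I M) {\<omega> \<in> space (PiM I M). s * W \<le> ES - S \<omega>} \<le> ennreal (exp (- (s\<^sup>2 * W / (4 * a))))"
proof -
  have tail: "emeasure (PiM I M) {\<omega> \<in> space (PiM I M). s * W \<le> \<sigma> * (S \<omega> - ES)}
      \<le> ennreal (exp (- (s\<^sup>2 * W / (4 * a))))" if \<sigma>: "\<sigma> \<in> {1, -1}" for \<sigma> :: real
  proof -
    have th: "\<bar>\<sigma> * (s / (2 * a)) * a\<bar> \<le> 1" using a s \<sigma> by auto
    have expo: "(\<sigma> * (s / (2 * a)))\<^sup>2 * a * W - s\<^sup>2 * W / (2 * a) = - (s\<^sup>2 * W / (4 * a))"
      using a \<sigma> by (auto simp: power2_eq_square field_simps)
    have pos: "0 < s / (2 * a)" using a s by simp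
    have iff: "s * W \<le> \<sigma> * (S \<omega> - ES) \<longleftrightarrow> s\<^sup>2 * W / (2 * a) \<le> \<sigma> * (s / (2 * a)) * (S \<omega> - ES)"
      for \<omega>
    proof -
      have e1: "s\<^sup>2 * W / (2 * a) = s / (2 * a) * (s * W)" by (simp add: power2_eq_square)
      have e2: "\<sigma> * (s / (2 * a)) * (S \<omega> - ES) = s / (2 * a) * (\<sigma> * (S \<omega> - ES))" by (simp add: ac_simps)
      show ?thesis unfolding e1 e2 by (rule mult_le_cancel_left_pos[OF pos, symmetric])
    qed
    have "emeasure (PiM I M) {\<omega> \<in> space (PiM I M). s\<^sup>2 * W / (2 * a) \<le> \<sigma> * (s / (2 * a)) * (S \<omega> - ES)}
        \<le> ennreal (exp ((\<sigma> * (s / (2 * a)))\<^sup>2 * a * W - s\<^sup>2 * W / (2 * a)))"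
      unfolding S_def ES_def W_def by (rule chernoff_PiM) (use prob fin meas bnd Ew a th in auto)
    thus ?thesis unfolding iff expo .
  qed
  show "emeasure (PiM I M) {\<omega> \<in> space (PiM I M). s * W \<le> S \<omega> - ES} \<le> ennreal (exp (- (s\<^sup>2 * W / (4 * a))))"
    using tail[of 1] by simp
  show "emeasure (PiM I M) {\<omega> \<in> space (PiM I M). s * W \<le> ES - S \<omega>} \<le> ennreal (exp (- (s\<^sup>2 * W / (4 * a))))"
    using tail[of "-1"] by simp
qed

lemma measurable_pmf_kernel:
  assumes "\<And>x. subprob_space (N x) \<and> sets (N x) = sets B"
  shows "N \<in> measurable (measure_pmf p) (subprob_algebra B)"
  using assms by (auto simp: space_subprob_algebra)

locale arm_model =
  fixes q :: "'p::finite pmf" and P :: "nat \<Rightarrow> 'p \<Rightarrow> 'v::finite pmf" and Yk :: "'v \<Rightarrow> 'p \<Rightarrow> real measure"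
  assumes Yk: "\<And>v p. prob_space (Yk v p) \<and> sets (Yk v p) = sets borel \<and> (AE y in Yk v p. 0 \<le> y \<and> y \<le> 1)"
begin

abbreviation obs_space :: "(real \<times> ('v \<times> 'p)) measure" where
  "obs_space \<equiv> borel \<Otimes>\<^sub>M count_space UNIV"

definition obs_kernel :: "'p \<Rightarrow> 'v \<Rightarrow> (real \<times> ('v \<times> 'p)) measure" where
  "obs_kernel p v = distr (Yk v p) obs_space (\<lambda>y. (y, (v, p)))"

definition arm_kernel :: "nat \<Rightarrow> 'p \<Rightarrow> (real \<times> ('v \<times> 'p)) measure" where
  "arm_kernel j p = measure_pmf (P j p) \<bind> obs_kernel p"

definition cond_mean :: "'v \<Rightarrow> 'p \<Rightarrow> real" where
  "cond_mean v p = integral\<^sup>L (Yk v p) (\<lambda>y. y)"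

lemma prob_space_Yk: "prob_space (Yk v p)" using Yk by auto

lemma sets_Yk [measurable_cong]: "sets (Yk v p) = sets borel" using Yk by auto

lemma AE_Yk_01: "AE y in Yk v p. 0 \<le> y \<and> y \<le> 1" using Yk by auto

lemma measurable_obs_pair: "(\<lambda>y. (y, (v, p))) \<in> measurable (Yk v p) obs_space"
  by (simp add: measurable_cong_sets[OF sets_Yk refl])

lemma prob_space_obs_kernel: "prob_space (obs_kernel p v)"
  and sets_obs_kernel: "sets (obs_kernel p v) = sets obs_space"
  unfolding obs_kernel_def using prob_space.prob_space_distr[OF prob_space_Yk measurable_obs_pair] by auto

lemma measurable_obs_kernel: "obs_kernel p \<in> measurable (measure_pmf (P j p)) (subprob_algebra obs_space)"
  by (rule measurable_pmf_kernel)
     (simp add: sets_obs_kernel prob_space_imp_subprob_space[OF prob_space_obs_kernel])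

lemma prob_space_arm_kernel: "prob_space (arm_kernel j p)"
  and sets_arm_kernel: "sets (arm_kernel j p) = sets obs_space"
  unfolding arm_kernel_def
  by (rule prob_space.prob_space_bind[OF prob_space_measure_pmf _ measurable_obs_kernel],
      simp add: prob_space_obs_kernel)
     (rule sets_bind[where N=obs_space], auto simp: sets_obs_kernel)

lemma measurable_arm_kernel: "arm_kernel j \<in> measurable (measure_pmf q) (subprob_algebra obs_space)"
  by (rule measurable_pmf_kernel)
     (simp add: sets_arm_kernel prob_space_imp_subprob_space[OF prob_space_arm_kernel])

lemma arm_law_eq_bind: "arm_law q P Yk j = measure_pmf q \<bind> arm_kernel j"
  unfolding arm_law_def arm_kernel_def obs_kernel_def ..

lemma prob_space_arm_law: "prob_space (arm_law q P Yk j)"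
  and sets_arm_law: "sets (arm_law q P Yk j) = sets obs_space"
  unfolding arm_law_eq_bind
  by (rule prob_space.prob_space_bind[OF prob_space_measure_pmf _ measurable_arm_kernel],
      simp add: prob_space_arm_kernel)
     (rule sets_bind[where N=obs_space], auto simp: sets_arm_kernel)

lemma nn_integral_arm_law:
  assumes f: "f \<in> borel_measurable obs_space"
  shows "(\<integral>\<^sup>+x. f x \<partial>arm_law q P Yk j) =
    (\<Sum>p\<in>UNIV. ennreal (pmf q p) * (\<Sum>v\<in>UNIV. ennreal (pmf (P j p) v) * (\<integral>\<^sup>+y. f (y, (v, p)) \<partial>Yk v p)))"
proof -
  have "(\<integral>\<^sup>+x. f x \<partial>arm_law q P Yk j) = (\<integral>\<^sup>+p. \<integral>\<^sup>+x. f x \<partial>arm_kernel j p \<partial>measure_pmf q)"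
    unfolding arm_law_eq_bind by (rule nn_integral_bind[OF f measurable_arm_kernel])
  also have "\<dots> = (\<integral>\<^sup>+p. \<integral>\<^sup>+v. \<integral>\<^sup>+x. f x \<partial>obs_kernel p v \<partial>measure_pmf (P j p) \<partial>measure_pmf q)"
    unfolding arm_kernel_def by (subst nn_integral_bind[OF f measurable_obs_kernel]) simp
  also have "\<dots> = (\<integral>\<^sup>+p. \<integral>\<^sup>+v. \<integral>\<^sup>+y. f (y, (v, p)) \<partial>Yk v p \<partial>measure_pmf (P j p) \<partial>measure_pmf q)"
    unfolding obs_kernel_def by (subst nn_integral_distr[OF measurable_obs_pair]) (use f in auto)
  finally show ?thesis by (simp add: nn_integral_measure_pmf nn_integral_count_space_finite)
qed

lemma AE_arm_law_Y_01: "AE x in arm_law q P Yk j. 0 \<le> fst x \<and> fst x \<le> 1"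
proof -
  have pr: "Measurable.pred obs_space (\<lambda>x. 0 \<le> fst x \<and> fst x \<le> 1)" by measurable
  show ?thesis unfolding arm_law_eq_bind
  proof (subst AE_bind[OF measurable_arm_kernel pr], rule AE_I2)
    fix p
    show "AE x in arm_kernel j p. 0 \<le> fst x \<and> fst x \<le> 1" unfolding arm_kernel_def
    proof (subst AE_bind[OF measurable_obs_kernel pr], rule AE_I2)
      fix v
      show "AE x in obs_kernel p v. 0 \<le> fst x \<and> fst x \<le> 1" unfolding obs_kernel_def
        using AE_Yk_01 by (subst AE_distr_iff[OF measurable_obs_pair]) auto
    qed
  qed
qed

lemma integrable_Yk: "integrable (Yk v p) (\<lambda>y. y)"
proof -
  interpret prob_space "Yk v p" by (rule prob_space_Yk)
  show ?thesis
  proof (rule integrable_const_bound[where B=1])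
    show "AE x in Yk v p. norm x \<le> 1" using AE_Yk_01 by (rule eventually_mono) auto
  qed (simp add: measurable_cong_sets[OF sets_Yk refl])
qed

lemma cond_mean_bounds: "0 \<le> cond_mean v p" "cond_mean v p \<le> 1"
proof -
  interpret prob_space "Yk v p" by (rule prob_space_Yk)
  show "0 \<le> cond_mean v p" unfolding cond_mean_def
    using AE_Yk_01 by (intro integral_nonneg_AE) (auto elim!: eventually_mono)
  have "cond_mean v p \<le> expectation (\<lambda>y. 1)" unfolding cond_mean_def
    using AE_Yk_01 by (intro integral_mono_AE integrable_Yk) (auto elim!: eventually_mono)
  thus "cond_mean v p \<le> 1" by (simp add: prob_space)
qed

lemma nn_integral_Yk_scaled:
  assumes "0 \<le> c" shows "(\<integral>\<^sup>+y. ennreal (y * c) \<partial>Yk v p) = ennreal (cond_mean v p * c)"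
proof -
  have "AE y in Yk v p. 0 \<le> y * c" using AE_Yk_01[of v p] by (rule eventually_mono) (use assms in auto)
  thus ?thesis by (subst nn_integral_eq_integral) (auto intro: integrable_Yk simp: cond_mean_def)
qed

lemma integral_arm_law:
  fixes g :: "'v \<times> 'p \<Rightarrow> real"
  assumes g: "\<And>z. 0 \<le> g z"
  shows "integrable (arm_law q P Yk j) (\<lambda>x. fst x * g (snd x))"
    and "integral\<^sup>L (arm_law q P Yk j) (\<lambda>x. fst x * g (snd x)) =
      (\<Sum>p\<in>UNIV. pmf q p * (\<Sum>v\<in>UNIV. pmf (P j p) v * (cond_mean v p * g (v, p))))"
proof -
  interpret prob_space "arm_law q P Yk j" by (rule prob_space_arm_law)
  have meas: "(\<lambda>x. fst x * g (snd x)) \<in> borel_measurable (arm_law q P Yk j)"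
    by (simp add: measurable_cong_sets[OF sets_arm_law refl])
  have gG: "g z \<le> Max (range g)" for z by (rule Max_ge) auto
  show "integrable (arm_law q P Yk j) (\<lambda>x. fst x * g (snd x))"
  proof (rule integrable_const_bound[where B="Max (range g)"])
    show "AE x in arm_law q P Yk j. norm (fst x * g (snd x)) \<le> Max (range g)"
      using AE_arm_law_Y_01
    proof (rule eventually_mono)
      fix x :: "real \<times> ('v \<times> 'p)" assume "0 \<le> fst x \<and> fst x \<le> 1"
      thus "norm (fst x * g (snd x)) \<le> Max (range g)" using g[of "snd x"] gG[of "snd x"]
        by (auto simp: abs_mult intro: order_trans[OF mult_left_le_one_le])
    qed
  qed (rule meas)
  have "integral\<^sup>L (arm_law q P Yk j) (\<lambda>x. fst x * g (snd x)) =
      enn2real (\<integral>\<^sup>+x. ennreal (fst x * g (snd x)) \<partial>arm_law q P Yk j)"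
  proof (intro integral_eq_nn_integral meas)
    show "AE x in arm_law q P Yk j. 0 \<le> fst x * g (snd x)"
      using AE_arm_law_Y_01[of j] by (rule eventually_mono) (use g in auto)
  qed
  also have "(\<integral>\<^sup>+x. ennreal (fst x * g (snd x)) \<partial>arm_law q P Yk j) =
      (\<Sum>p\<in>UNIV. ennreal (pmf q p) * (\<Sum>v\<in>UNIV. ennreal (pmf (P j p) v) * ennreal (cond_mean v p * g (v, p))))"
    by (subst nn_integral_arm_law) (auto simp: nn_integral_Yk_scaled g)
  also have "\<dots> = ennreal (\<Sum>p\<in>UNIV. pmf q p * (\<Sum>v\<in>UNIV. pmf (P j p) v * (cond_mean v p * g (v, p))))"
    using g cond_mean_bounds by (simp add: ennreal_mult[symmetric] sum_nonneg mult_nonneg_nonneg)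
  finally show "integral\<^sup>L (arm_law q P Yk j) (\<lambda>x. fst x * g (snd x)) =
      (\<Sum>p\<in>UNIV. pmf q p * (\<Sum>v\<in>UNIV. pmf (P j p) v * (cond_mean v p * g (v, p))))"
    using g cond_mean_bounds by (simp add: sum_nonneg mult_nonneg_nonneg)
qed

lemma arm_mean_eq: "arm_mean q P Yk k = (\<Sum>p\<in>UNIV. pmf q p * (\<Sum>v\<in>UNIV. pmf (P k p) v * cond_mean v p))"
  using integral_arm_law(2)[of "\<lambda>_. 1" k] by (simp add: arm_mean_def)

lemma arm_mean_bounds: "0 \<le> arm_mean q P Yk k" "arm_mean q P Yk k \<le> 1"
proof -
  show "0 \<le> arm_mean q P Yk k" unfolding arm_mean_eq
    using cond_mean_bounds by (intro sum_nonneg mult_nonneg_nonneg) auto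
  have "arm_mean q P Yk k \<le> (\<Sum>p\<in>UNIV. pmf q p * (\<Sum>v\<in>UNIV. pmf (P k p) v * 1))" unfolding arm_mean_eq
    using cond_mean_bounds by (intro sum_mono mult_left_mono) auto
  thus "arm_mean q P Yk k \<le> 1" by (simp add: sum_pmf_eq_1)
qed

end

subsection \<open>Truncated importance weights\<close>

lemma f1_ge: assumes "0 \<le> x" shows "2 * (x - 1) \<le> f1 x"
proof -
  have "x * x \<le> x * exp (x - 1)"
    using assms exp_ge_add_one_self[of "x - 1"] by (intro mult_left_mono) auto
  moreover have "2 * x - 1 \<le> x * x" using zero_le_power2[of "x - 1"] by (simp add: power2_eq_square algebra_simps)
  ultimately show ?thesis unfolding f1_def by simp
qed

locale abs_cont_pair =
  fixes q :: "'p::finite pmf" and P :: "nat \<Rightarrow> 'p \<Rightarrow> 'v::finite pmf" and k j :: nat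
  assumes abs_cont: "\<And>p v. p \<in> set_pmf q \<Longrightarrow> (pmf (P k p) v > 0 \<longleftrightarrow> pmf (P j p) v > 0)"
begin

definition ratio :: "'v \<Rightarrow> 'p \<Rightarrow> real" where
  "ratio v p = pmf (P k p) v / pmf (P j p) v"

lemma ratio_nonneg: "0 \<le> ratio v p" by (simp add: ratio_def)

lemma pmf_mult_ratio_le: "pmf (P j p) v * ratio v p \<le> pmf (P k p) v"
  by (cases "pmf (P j p) v = 0") (auto simp: ratio_def)

lemma pmf_mult_ratio: assumes "p \<in> set_pmf q" shows "pmf (P j p) v * ratio v p = pmf (P k p) v"
proof (cases "pmf (P j p) v = 0")
  case True thus ?thesis using abs_cont[OF assms, of v] by (simp add: ratio_def) (metis pmf_nonneg order_le_less)
qed (simp add: ratio_def)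

lemma Df1_eq_ratio: "Df1 q P k j = (\<Sum>p\<in>UNIV. pmf q p * (\<Sum>v\<in>UNIV. pmf (P j p) v * f1 (ratio v p)))"
  by (simp add: Df1_def ratio_def)

lemma Df1_nonneg: "0 \<le> Df1 q P k j"
  unfolding Df1_eq_ratio
proof (intro sum_nonneg)
  fix p
  show "0 \<le> pmf q p * (\<Sum>v\<in>UNIV. pmf (P j p) v * f1 (ratio v p))"
  proof (cases "p \<in> set_pmf q")
    case False thus ?thesis by (simp add: set_pmf_eq)
  next
    case True
    have "2 * ((\<Sum>v\<in>UNIV. pmf (P j p) v * ratio v p) - (\<Sum>v\<in>UNIV. pmf (P j p) v))
        = (\<Sum>v\<in>UNIV. pmf (P j p) v * (2 * (ratio v p - 1)))"
      by (simp add: algebra_simps sum_distrib_left sum_subtractf)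
    also have "\<dots> \<le> (\<Sum>v\<in>UNIV. pmf (P j p) v * f1 (ratio v p))"
      by (intro sum_mono mult_left_mono f1_ge ratio_nonneg) auto
    finally show ?thesis using pmf_mult_ratio[OF True] by (simp add: sum_pmf_eq_1)
  qed
qed

lemma Mdiv_ge_1: "1 \<le> Mdiv q P k j"
  using Df1_nonneg by (simp add: Mdiv_def)

lemma exp_Mdiv: "exp (Mdiv q P k j - 1) = 1 + Df1 q P k j"
  using Df1_nonneg by (simp add: Mdiv_def)

lemma expected_ratio_exp:
  "(\<Sum>p\<in>UNIV. pmf q p * (\<Sum>v\<in>UNIV. pmf (P j p) v * (ratio v p * exp (ratio v p - 1)))) = exp (Mdiv q P k j - 1)"
proof -
  have "(\<Sum>p\<in>UNIV. pmf q p * (\<Sum>v\<in>UNIV. pmf (P j p) v * (ratio v p * exp (ratio v p - 1))))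
     = (\<Sum>p\<in>UNIV. pmf q p * (\<Sum>v\<in>UNIV. pmf (P j p) v * f1 (ratio v p)) + pmf q p * (\<Sum>v\<in>UNIV. pmf (P j p) v))"
    by (intro sum.cong refl) (simp add: f1_def algebra_simps sum.distrib sum_subtractf sum_distrib_left)
  thus ?thesis by (simp add: sum.distrib Df1_eq_ratio sum_pmf_eq_1 exp_Mdiv)
qed

text \<open>The mass lost by truncating the ratio at \<open>C\<close> is controlled by \<open>exp (1 - C)\<close>
  times the integrand \<open>r exp (r - 1)\<close> of \<open>1 + D\<^sub>f\<^sub>1\<close>.\<close>
lemma truncation_loss_le:
  assumes p: "p \<in> set_pmf q" and m: "0 \<le> m" "m \<le> 1"
  shows "pmf (P k p) v * m - pmf (P j p) v * (m * (ratio v p * (if ratio v p \<le> C then 1 else 0)))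
      \<le> exp (1 - C) * (pmf (P j p) v * (ratio v p * exp (ratio v p - 1)))"
proof (cases "ratio v p \<le> C")
  case True thus ?thesis using pmf_mult_ratio[OF p, of v] ratio_nonneg[of v p]
    by (simp add: algebra_simps)
next
  case False
  have "pmf (P k p) v * m \<le> pmf (P j p) v * ratio v p"
    using pmf_mult_ratio[OF p, of v] m by (simp add: mult_left_le)
  also have "\<dots> \<le> pmf (P j p) v * (ratio v p * exp (ratio v p - C))"
    using False ratio_nonneg[of v p] by (intro mult_left_mono) (auto intro: mult_right_le_one_le mult_le_cancel_left1[THEN iffD2])
  also have "\<dots> = exp (1 - C) * (pmf (P j p) v * (ratio v p * exp (ratio v p - 1)))"
    by (simp add: exp_add[symmetric] algebra_simps)
  finally show ?thesis using False by simp
qed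

lemma truncated_expectation_bounds:
  fixes m :: "'v \<Rightarrow> 'p \<Rightarrow> real" and a :: real
  assumes m: "\<And>v p. 0 \<le> m v p" "\<And>v p. m v p \<le> 1" and a: "1 \<le> a"
  defines "C \<equiv> a * Mdiv q P k j"
  defines "mu \<equiv> (\<Sum>p\<in>UNIV. pmf q p * (\<Sum>v\<in>UNIV. pmf (P k p) v * m v p))"
  defines "EW \<equiv> (\<Sum>p\<in>UNIV. pmf q p * (\<Sum>v\<in>UNIV. pmf (P j p) v *
              (m v p * (ratio v p * (if ratio v p \<le> C then 1 else 0)))))"
  shows "EW \<le> 1" "EW \<le> mu" "mu - EW \<le> exp (1 - a)"
proof -
  show "EW \<le> mu" unfolding EW_def mu_def
  proof (intro sum_mono mult_left_mono)
    fix p v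
    have "pmf (P j p) v * (m v p * (ratio v p * (if ratio v p \<le> C then 1 else 0)))
        \<le> (pmf (P j p) v * ratio v p) * m v p"
      using m ratio_nonneg[of v p] by (simp add: algebra_simps)
    also have "\<dots> \<le> pmf (P k p) v * m v p" using m by (intro mult_right_mono pmf_mult_ratio_le) auto
    finally show "pmf (P j p) v * (m v p * (ratio v p * (if ratio v p \<le> C then 1 else 0))) \<le> pmf (P k p) v * m v p" .
  qed auto
  also have "mu \<le> (\<Sum>p\<in>UNIV. pmf q p * (\<Sum>v\<in>UNIV. pmf (P k p) v))" unfolding mu_def
    using m by (intro sum_mono mult_left_mono) (auto intro: mult_right_le_one_le)
  finally show "EW \<le> 1" by (simp add: sum_pmf_eq_1)
  have "mu - EW = (\<Sum>p\<in>UNIV. pmf q p * (\<Sum>v\<in>UNIV. pmf (P k p) v * m v p -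
      pmf (P j p) v * (m v p * (ratio v p * (if ratio v p \<le> C then 1 else 0)))))"
    by (simp add: mu_def EW_def sum_subtractf right_diff_distrib)
  also have "\<dots> \<le> (\<Sum>p\<in>UNIV. pmf q p * (\<Sum>v\<in>UNIV. exp (1 - C) * (pmf (P j p) v * (ratio v p * exp (ratio v p - 1)))))"
  proof (intro sum_mono)
    fix p
    show "pmf q p * (\<Sum>v\<in>UNIV. pmf (P k p) v * m v p -
          pmf (P j p) v * (m v p * (ratio v p * (if ratio v p \<le> C then 1 else 0))))
        \<le> pmf q p * (\<Sum>v\<in>UNIV. exp (1 - C) * (pmf (P j p) v * (ratio v p * exp (ratio v p - 1))))"
      by (cases "p \<in> set_pmf q")
         (auto simp: set_pmf_eq intro!: mult_left_mono sum_mono truncation_loss_le m)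
  qed
  also have "\<dots> = exp (1 - C) * (\<Sum>p\<in>UNIV. pmf q p * (\<Sum>v\<in>UNIV. pmf (P j p) v * (ratio v p * exp (ratio v p - 1))))"
    by (simp add: sum_distrib_left mult.left_commute)
  also have "\<dots> = exp (1 - C) * exp (Mdiv q P k j - 1)" by (simp only: expected_ratio_exp)
  also have "\<dots> = exp (Mdiv q P k j * (1 - a))" by (simp add: C_def exp_add[symmetric] algebra_simps)
  also have "\<dots> \<le> exp (1 - a)"
    using Mdiv_ge_1 a by (simp add: mult_le_cancel_right2)
  finally show "mu - EW \<le> exp (1 - a)" .
qed

end

subsection \<open>The allocation problem\<close>

context
  fixes K :: nat and M :: "nat \<Rightarrow> nat \<Rightarrow> real" and R :: "nat set"
  assumes R: "finite R" "R \<noteq> {}" and M_ge_1: "\<And>k j. k \<in> R \<Longrightarrow> j < K \<Longrightarrow> 1 \<le> M k j"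
begin

lemma alloc_obj_le_1:
  assumes f: "feasible K c B \<nu>" shows "alloc_obj K M R \<nu> \<le> 1"
proof -
  obtain i where i: "i \<in> R" using R by auto
  have "alloc_obj K M R \<nu> \<le> (\<Sum>j<K. \<nu> j / M i j)"
    unfolding alloc_obj_def using R i by (intro Min_le) auto
  also have "\<dots> \<le> (\<Sum>j<K. \<nu> j)"
  proof (intro sum_mono)
    fix j assume "j \<in> {..<K}"
    hence "\<nu> j / M i j \<le> \<nu> j / 1"
      using M_ge_1[OF i, of j] f by (intro divide_left_mono) (auto simp: feasible_def)
    thus "\<nu> j / M i j \<le> \<nu> j" by simp
  qed
  also have "\<dots> = 1" using f by (simp add: feasible_def)
  finally show ?thesis .
qed

lemma alloc_obj_pos:
  assumes f: "feasible K c B \<nu>" shows "0 < alloc_obj K M R \<nu>"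
proof -
  have nn: "0 \<le> \<nu> j" if "j < K" for j using f that by (auto simp: feasible_def)
  have "\<exists>j<K. \<nu> j \<noteq> 0"
  proof (rule ccontr)
    assume "\<not> (\<exists>j<K. \<nu> j \<noteq> 0)"
    hence "(\<Sum>j<K. \<nu> j) = 0" by simp
    thus False using f by (simp add: feasible_def)
  qed
  then obtain j0 where "j0 < K" "\<nu> j0 \<noteq> 0" by blast
  hence j0: "j0 < K" "0 < \<nu> j0" using nn[of j0] by auto
  have "0 < (\<Sum>j<K. \<nu> j / M i j)" if "i \<in> R" for i
  proof -
    have Mpos: "0 < M i j" if "j < K" for j using M_ge_1[OF \<open>i \<in> R\<close> that] by linarith
    show ?thesis using j0 nn Mpos by (intro sum_pos2[of _ j0]) (auto simp: less_imp_le)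
  qed
  thus ?thesis unfolding alloc_obj_def using R by (subst Min_gr_iff) auto
qed

lemma alloc_obj_le_vstar:
  assumes f: "feasible K c B \<nu>" shows "alloc_obj K M R \<nu> \<le> vstar K M c B R"
  unfolding vstar_def
proof (rule cSUP_upper)
  show "bdd_above (alloc_obj K M R ` {\<nu>. feasible K c B \<nu>})"
    using alloc_obj_le_1 by (intro bdd_aboveI[of _ 1]) auto
qed (use f in auto)

lemma vstar_pos_le_1:
  assumes "is_alloc_maximizer K M c B R \<nu>"
  shows "0 < vstar K M c B R" "vstar K M c B R \<le> 1"
  using assms alloc_obj_pos[of c B \<nu>] alloc_obj_le_1[of c B \<nu>] by (auto simp: is_alloc_maximizer_def)

end

lemma vstar_antimono:
  assumes R: "R \<noteq> {}" "R \<subseteq> R'" "finite R'" and M_ge_1: "\<And>k j. k \<in> R' \<Longrightarrow> j < K \<Longrightarrow> 1 \<le> M k j"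
    and \<nu>: "is_alloc_maximizer K M c B R' \<nu>"
  shows "vstar K M c B R' \<le> vstar K M c B R"
proof -
  have fin: "finite R" using R finite_subset by auto
  have "vstar K M c B R' = alloc_obj K M R' \<nu>" using \<nu> by (simp add: is_alloc_maximizer_def)
  also have "\<dots> \<le> alloc_obj K M R \<nu>"
    unfolding alloc_obj_def using R fin by (intro Min_antimono image_mono) auto
  also have "\<dots> \<le> vstar K M c B R"
    using \<nu> R fin M_ge_1 by (intro alloc_obj_le_vstar) (auto simp: is_alloc_maximizer_def)
  finally show ?thesis .
qed

subsection \<open>Gaps and the elimination step\<close>

locale sris_setting =
  fixes K :: nat and q :: "'p::finite pmf" and P :: "nat \<Rightarrow> 'p \<Rightarrow> 'v::finite pmf"
    and Yk :: "'v \<Rightarrow> 'p \<Rightarrow> real measure" and c :: "nat \<Rightarrow> real" and B :: real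
    and nu :: "nat set \<Rightarrow> nat \<Rightarrow> real" and T :: nat and kstar :: nat
  assumes Yk: "\<And>v p. prob_space (Yk v p) \<and> sets (Yk v p) = sets borel \<and> (AE y in Yk v p. 0 \<le> y \<and> y \<le> 1)"
      and abs_cont: "\<And>k j p v. k < K \<Longrightarrow> j < K \<Longrightarrow> p \<in> set_pmf q \<Longrightarrow>
                 (pmf (P k p) v > 0 \<longleftrightarrow> pmf (P j p) v > 0)"
      and nu: "\<And>R. R \<noteq> {} \<Longrightarrow> R \<subseteq> {..<K} \<Longrightarrow> is_alloc_maximizer K (Mdiv q P) c B R (nu R)"
      and T_pos: "0 < T"
      and kstar: "kstar < K"
      and best: "\<And>k. k < K \<Longrightarrow> k \<noteq> kstar \<Longrightarrow> arm_mean q P Yk k < arm_mean q P Yk kstar"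
begin

sublocale arm_model q P Yk using Yk by unfold_locales

abbreviation "\<mu> \<equiv> arm_mean q P Yk"
abbreviation "MM \<equiv> Mdiv q P"
abbreviation "hn \<equiv> hlog (n_phases T)"

definition \<Delta> :: "nat \<Rightarrow> real" where "\<Delta> k = \<mu> kstar - \<mu> k"

definition lev :: "nat \<Rightarrow> int" where "lev k = \<lfloor>log 2 (10 / \<Delta> k)\<rfloor>"

text \<open>The state SRIS should be in after phase \<open>l\<close>: the best arm is active and every other
  active arm has \<open>\<Delta>\<^sub>k \<le> 10/2\<^sup>l\<close>.\<close>
definition good_active :: "nat \<Rightarrow> nat set \<Rightarrow> bool" where
  "good_active l R \<longleftrightarrow> R \<noteq> {} \<and> R \<subseteq> {..<K} \<and> kstar \<in> R \<and> (\<forall>i\<in>R. i \<noteq> kstar \<longrightarrow> int l \<le> lev i)"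

lemma gap_kstar: "\<Delta> kstar = 0" by (simp add: \<Delta>_def)

lemma gap_pos: "k < K \<Longrightarrow> k \<noteq> kstar \<Longrightarrow> 0 < \<Delta> k"
  using best by (simp add: \<Delta>_def)

lemma gap_le_1: "\<Delta> k \<le> 1"
  using arm_mean_bounds[of kstar] arm_mean_bounds[of k] by (simp add: \<Delta>_def)

lemma gap_nonneg: "k < K \<Longrightarrow> 0 \<le> \<Delta> k"
  using gap_pos[of k] gap_kstar by (cases "k = kstar") auto

lemma abs_cont_pair_arms: "i < K \<Longrightarrow> j < K \<Longrightarrow> abs_cont_pair q P i j"
  by unfold_locales (rule abs_cont)

lemma MM_ge_1: "i < K \<Longrightarrow> j < K \<Longrightarrow> 1 \<le> MM i j"
  using abs_cont_pair.Mdiv_ge_1[OF abs_cont_pair_arms] by blast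

lemma vstar_pos_le_1_arms:
  assumes "R \<noteq> {}" "R \<subseteq> {..<K}"
  shows "0 < vstar K MM c B R" "vstar K MM c B R \<le> 1"
  using vstar_pos_le_1[OF finite_subset[OF assms(2)] assms(1) MM_ge_1 nu[OF assms]] assms(2) by auto

lemma vstar_antimono_arms:
  assumes "R \<noteq> {}" "R \<subseteq> R'" "R' \<subseteq> {..<K}"
  shows "vstar K MM c B R' \<le> vstar K MM c B R"
  using assms MM_ge_1 nu[of R'] by (intro vstar_antimono) (auto intro: finite_subset)

lemma gap_level_eq: "k < K \<Longrightarrow> k \<noteq> kstar \<Longrightarrow> gap_level (\<Delta> k) = ereal (real_of_int (lev k))"
  using gap_pos[of k] by (simp add: gap_level_def lev_def)

lemma lev_ge_3: assumes "k < K" "k \<noteq> kstar" shows "3 \<le> lev k"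
proof -
  have "3 \<le> log 2 (10 / \<Delta> k)"
    using gap_pos[OF assms] gap_le_1[of k] by (intro log2_ge_3) (simp add: field_simps)
  thus ?thesis unfolding lev_def by linarith
qed

lemma gap_gt_lev: assumes "k < K" "k \<noteq> kstar" shows "10 / 2 ^ nat (lev k + 1) < \<Delta> k"
proof -
  have D: "0 < \<Delta> k" using gap_pos[OF assms] .
  have "log 2 (10 / \<Delta> k) < real_of_int (lev k + 1)" unfolding lev_def by linarith
  hence "10 / \<Delta> k < 2 powr (real_of_int (lev k + 1))" using D by (subst log_less_iff[symmetric]) auto
  also have "\<dots> = 2 ^ nat (lev k + 1)" using lev_ge_3[OF assms] by (simp add: powr_realpow[symmetric])
  finally show ?thesis using D by (simp add: field_simps)
qed

lemma lev_antimono: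
  assumes "i < K" "i \<noteq> kstar" "\<Delta> i \<le> \<Delta> k" shows "lev k \<le> lev i"
proof -
  have "log 2 (10 / \<Delta> k) \<le> log 2 (10 / \<Delta> i)"
    using gap_pos[OF assms(1,2)] assms(3) by (subst log_le_cancel_iff) (auto intro: divide_left_mono)
  thus ?thesis unfolding lev_def by (rule floor_mono)
qed

lemma hlog_pos: "0 < hn"
proof -
  have "log 2 10 \<le> log 2 (10 * sqrt (real T))" using T_pos by (subst log_le_cancel_iff) auto
  moreover have "0 < log 2 (10::real)" by simp
  ultimately have "1 \<le> n_phases T" unfolding n_phases_def by linarith
  thus ?thesis unfolding hlog_def by (intro sum_pos2[of _ 1]) auto
qed

lemma good_active_eliminate:
  assumes l: "1 \<le> l" and good: "good_active (l - 1) R"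
    and Y: "\<And>i. i \<in> R \<Longrightarrow> \<bar>Yh i - \<mu> i\<bar> < 5/4 * (1/2)^(l-1)"
  shows "good_active l (eliminate l R Yh)"
proof -
  define g :: real where "g = 5 / 2^l"
  have "(2::real)^l = 2 * 2^(l-1)" using l by (metis Suc_diff_1 less_le_trans zero_less_one power_Suc)
  hence Y2: "\<bar>Yh i - \<mu> i\<bar> < g/2" if "i \<in> R" for i
    using Y[OF that] unfolding g_def by (simp add: power_one_over)
  have R: "R \<subseteq> {..<K}" "kstar \<in> R" and levR: "\<And>i. i \<in> R \<Longrightarrow> i \<noteq> kstar \<Longrightarrow> int (l-1) \<le> lev i"
    using good by (auto simp: good_active_def)
  have fin: "finite R" using R finite_subset by auto
  have "Max (Yh ` R) \<in> Yh ` R" using fin R by (intro Max_in) auto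
  then obtain i0 where i0: "i0 \<in> R" "Max (Yh ` R) = Yh i0" by auto
  have "\<mu> i0 \<le> \<mu> kstar" using best[of i0] R i0 by (cases "i0 = kstar") auto
  hence "Yh i0 < Yh kstar + g" using Y2[OF i0(1)] Y2[OF R(2)] by linarith
  hence kstar_in: "kstar \<in> eliminate l R Yh" using R(2) i0 by (auto simp: eliminate_def g_def)
  have "int l \<le> lev i" if i: "i \<in> eliminate l R Yh" "i \<noteq> kstar" for i
  proof (rule ccontr)
    assume "\<not> int l \<le> lev i"
    have iR: "i \<in> R" using i by (auto simp: eliminate_def)
    have iK: "i < K" using iR R by auto
    have "(2::real) ^ nat (lev i + 1) \<le> 2 ^ l"
      using \<open>\<not> int l \<le> lev i\<close> lev_ge_3[OF iK i(2)] by (intro power_increasing) auto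
    hence "10 / 2^l \<le> 10 / (2::real) ^ nat (lev i + 1)" by (intro divide_left_mono) auto
    with gap_gt_lev[OF iK i(2)] have "2 * g < \<Delta> i" by (simp add: g_def)
    hence "Yh i + g < Yh kstar" using Y2[OF iR] Y2[OF R(2)] unfolding \<Delta>_def by linarith
    also have "Yh kstar \<le> Max (Yh ` R)" using fin R(2) by (intro Max_ge) auto
    finally show False using i(1) by (auto simp: eliminate_def g_def)
  qed
  thus ?thesis using kstar_in R by (auto simp: good_active_def eliminate_def)
qed

end

subsection \<open>Concentration of the estimates in one phase\<close>

lemma measurable_eliminate:
  fixes Yh :: "nat \<Rightarrow> 'a \<Rightarrow> real"
  assumes R: "finite R" and Yh: "\<And>k. Yh k \<in> borel_measurable N"
  shows "(\<lambda>\<omega>. eliminate l R (\<lambda>k. Yh k \<omega>)) \<in> measurable N (count_space UNIV)"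
proof -
  have "(\<lambda>\<omega>. eliminate l R (\<lambda>k. Yh k \<omega>)) \<in> measurable N (count_space (Pow R))"
    unfolding measurable_count_space_eq_countable[OF countable_finite[OF finite_Pow_iff[THEN iffD2, OF R]]]
  proof (intro conjI ballI)
    show "(\<lambda>\<omega>. eliminate l R (\<lambda>k. Yh k \<omega>)) \<in> space N \<rightarrow> Pow R" by (auto simp: eliminate_def)
    fix S assume S: "S \<in> Pow R"
    have "(\<lambda>\<omega>. eliminate l R (\<lambda>k. Yh k \<omega>)) -` {S} \<inter> space N =
        {\<omega> \<in> space N. \<forall>i\<in>R. (i \<in> S) = (\<not> Max ((\<lambda>k. Yh k \<omega>) ` R) > Yh i \<omega> + 5 / 2 ^ l)}"
      using S by (auto simp: eliminate_def)
    also have "\<dots> \<in> sets N" using R Yh by measurable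
    finally show "(\<lambda>\<omega>. eliminate l R (\<lambda>k. Yh k \<omega>)) -` {S} \<inter> space N \<in> sets N" .
  qed
  thus ?thesis by (rule measurable_compose) simp
qed

context sris_setting
begin

definition sample_index :: "(nat \<Rightarrow> nat) \<Rightarrow> (nat \<times> nat) set" where
  "sample_index m = {(j, s). j < K \<and> s < m j}"

definition sample_space :: "(nat \<Rightarrow> nat) \<Rightarrow> (nat \<times> nat \<Rightarrow> real \<times> ('v \<times> 'p)) measure" where
  "sample_space m = PiM (sample_index m) (\<lambda>x. arm_law q P Yk (fst x))"

definition trunc_term :: "real \<Rightarrow> nat \<Rightarrow> nat \<Rightarrow> real \<times> ('v \<times> 'p) \<Rightarrow> real" where
  "trunc_term a i j x =
     fst x * iw_ratio P i j x * (if iw_ratio P i j x \<le> a * MM i j then 1 else 0) / MM i j"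

lemma sample_index_eq_Sigma: "sample_index m = (SIGMA j:{..<K}. {..<m j})"
  by (auto simp: sample_index_def)

lemma finite_sample_index: "finite (sample_index m)"
  by (simp add: sample_index_eq_Sigma)

lemma sum_sample_index: "(\<Sum>x\<in>sample_index m. f x) = (\<Sum>j<K. \<Sum>s<m j. f (j, s))"
  by (simp add: sample_index_eq_Sigma sum.Sigma)

lemma sample_weight_eq: "(\<Sum>j<K. real (m j) / MM i j) = (\<Sum>x\<in>sample_index m. 1 / MM i (fst x))"
  by (simp add: sum_sample_index)

lemma prob_space_sample_space: "prob_space (sample_space m)"
  unfolding sample_space_def by (intro prob_space_PiM prob_space_arm_law)

lemma est_eq_trunc_terms:
  "est K MM P m \<epsilon> i \<omega> =
     (\<Sum>x\<in>sample_index m. trunc_term (2 * ln (2 / \<epsilon>)) i (fst x) (\<omega> x)) / (\<Sum>j<K. real (m j) / MM i j)"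
  unfolding est_def Let_def sum_sample_index by (simp add: trunc_term_def)

lemma measurable_trunc_term: "trunc_term a i j \<in> borel_measurable (arm_law q P Yk j)"
  unfolding trunc_term_def iw_ratio_def by (simp add: measurable_cong_sets[OF sets_arm_law refl])

lemma measurable_sum_trunc_terms:
  "(\<lambda>\<omega>. \<Sum>x\<in>sample_index m. trunc_term a i (fst x) (\<omega> x)) \<in> borel_measurable (sample_space m)"
  unfolding sample_space_def
proof (intro borel_measurable_sum)
  fix x assume x: "x \<in> sample_index m"
  show "(\<lambda>\<omega>. trunc_term a i (fst x) (\<omega> x))
      \<in> borel_measurable (PiM (sample_index m) (\<lambda>x. arm_law q P Yk (fst x)))"
    by (rule measurable_compose[OF measurable_component_singleton[OF x] measurable_trunc_term])
qed

lemma measurable_est: "(\<lambda>\<omega>. est K MM P m \<epsilon> i \<omega>) \<in> borel_measurable (sample_space m)"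
  unfolding est_eq_trunc_terms using measurable_sum_trunc_terms by simp

lemma trunc_term_bounds:
  assumes ij: "i < K" "j < K" and a: "1 \<le> a"
  shows "AE x in arm_law q P Yk j. 0 \<le> trunc_term a i j x \<and> trunc_term a i j x \<le> a"
    and "integral\<^sup>L (arm_law q P Yk j) (trunc_term a i j) \<le> 1 / MM i j"
    and "0 \<le> \<mu> i - MM i j * integral\<^sup>L (arm_law q P Yk j) (trunc_term a i j)"
    and "\<mu> i - MM i j * integral\<^sup>L (arm_law q P Yk j) (trunc_term a i j) \<le> exp (1 - a)"
proof -
  interpret ac: abs_cont_pair q P i j by (rule abs_cont_pair_arms[OF ij])
  have M1: "1 \<le> MM i j" by (rule MM_ge_1[OF ij])
  define g where "g z = ac.ratio (fst z) (snd z) * (if ac.ratio (fst z) (snd z) \<le> a * MM i j then 1 else 0) / MM i j"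
    for z :: "'v \<times> 'p"
  have X_eq: "trunc_term a i j = (\<lambda>x. fst x * g (snd x))"
    by (rule ext) (simp add: trunc_term_def g_def iw_ratio_def ac.ratio_def)
  have g0: "0 \<le> g z" for z using M1 by (simp add: g_def ac.ratio_nonneg)
  have ga: "g z \<le> a" for z
    using M1 a by (cases "ac.ratio (fst z) (snd z) \<le> a * MM i j") (auto simp: g_def divide_le_eq)
  show "AE x in arm_law q P Yk j. 0 \<le> trunc_term a i j x \<and> trunc_term a i j x \<le> a"
    using AE_arm_law_Y_01[of j]
  proof (rule eventually_mono)
    fix x :: "real \<times> 'v \<times> 'p" assume x: "0 \<le> fst x \<and> fst x \<le> 1"
    have "fst x * g (snd x) \<le> 1 * a" using x g0 ga by (intro mult_mono) auto
    thus "0 \<le> trunc_term a i j x \<and> trunc_term a i j x \<le> a" using x g0 by (simp add: X_eq)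
  qed
  define EW where "EW = (\<Sum>p\<in>UNIV. pmf q p * (\<Sum>v\<in>UNIV. pmf (P j p) v *
    (cond_mean v p * (ac.ratio v p * (if ac.ratio v p \<le> a * MM i j then 1 else 0)))))"
  have "integral\<^sup>L (arm_law q P Yk j) (trunc_term a i j)
      = (\<Sum>p\<in>UNIV. pmf q p * (\<Sum>v\<in>UNIV. pmf (P j p) v * (cond_mean v p * g (v, p))))"
    unfolding X_eq by (rule integral_arm_law(2)[OF g0])
  also have "\<dots> = EW / MM i j"
    by (simp add: EW_def g_def sum_divide_distrib[symmetric] algebra_simps)
  finally have int: "integral\<^sup>L (arm_law q P Yk j) (trunc_term a i j) = EW / MM i j" .
  have "EW \<le> 1" "EW \<le> \<mu> i" "\<mu> i - EW \<le> exp (1 - a)"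
    using ac.truncated_expectation_bounds[OF cond_mean_bounds a] unfolding EW_def arm_mean_eq by auto
  thus "integral\<^sup>L (arm_law q P Yk j) (trunc_term a i j) \<le> 1 / MM i j"
    and "0 \<le> \<mu> i - MM i j * integral\<^sup>L (arm_law q P Yk j) (trunc_term a i j)"
    and "\<mu> i - MM i j * integral\<^sup>L (arm_law q P Yk j) (trunc_term a i j) \<le> exp (1 - a)"
    unfolding int using M1 by (auto intro: divide_right_mono)
qed

lemma expected_sum_trunc_terms:
  fixes m :: "nat \<Rightarrow> nat"
  assumes i: "i < K" and a: "1 \<le> a"
  defines "Z \<equiv> \<Sum>j<K. real (m j) / MM i j"
    and "ES \<equiv> \<Sum>x\<in>sample_index m. integral\<^sup>L (arm_law q P Yk (fst x)) (trunc_term a i (fst x))"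
  shows "0 \<le> \<mu> i * Z - ES" and "\<mu> i * Z - ES \<le> exp (1 - a) * Z"
proof -
  have Mpos: "0 < MM i j" if "j < K" for j using MM_ge_1[OF i that] by linarith
  have K_x: "fst x < K" if "x \<in> sample_index m" for x using that by (auto simp: sample_index_def)
  have eq: "\<mu> i * Z - ES = (\<Sum>x\<in>sample_index m.
      (\<mu> i - MM i (fst x) * integral\<^sup>L (arm_law q P Yk (fst x)) (trunc_term a i (fst x))) / MM i (fst x))"
  proof -
    have "\<mu> i * Z - ES = (\<Sum>x\<in>sample_index m.
        \<mu> i / MM i (fst x) - integral\<^sup>L (arm_law q P Yk (fst x)) (trunc_term a i (fst x)))"
      by (simp add: Z_def sample_weight_eq ES_def sum_distrib_left sum_subtractf)
    also have "\<dots> = (\<Sum>x\<in>sample_index m.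
        (\<mu> i - MM i (fst x) * integral\<^sup>L (arm_law q P Yk (fst x)) (trunc_term a i (fst x))) / MM i (fst x))"
      using Mpos K_x by (intro sum.cong refl) (simp add: diff_divide_distrib less_imp_neq[symmetric])
    finally show ?thesis .
  qed
  show "0 \<le> \<mu> i * Z - ES" unfolding eq
    using trunc_term_bounds(3)[OF i _ a] Mpos K_x by (intro sum_nonneg divide_nonneg_pos) auto
  have "\<mu> i * Z - ES \<le> (\<Sum>x\<in>sample_index m. exp (1 - a) / MM i (fst x))" unfolding eq
    using trunc_term_bounds(4)[OF i _ a] Mpos K_x by (intro sum_mono divide_right_mono) (auto simp: less_imp_le)
  also have "\<dots> = exp (1 - a) * Z" by (simp add: Z_def sample_weight_eq sum_distrib_left)
  finally show "\<mu> i * Z - ES \<le> exp (1 - a) * Z" .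
qed

lemma est_deviation:
  fixes m :: "nat \<Rightarrow> nat"
  assumes l: "1 \<le> l" and i: "i < K"
  defines "\<epsilon> \<equiv> (1/2::real) ^ (l - 1)"
  defines "a \<equiv> 2 * ln (2 / \<epsilon>)"
  defines "t \<equiv> 5/4 * \<epsilon> - exp (1 - a)" and "Z \<equiv> \<Sum>j<K. real (m j) / MM i j"
  assumes Z: "0 < Z"
  shows "emeasure (sample_space m) {\<omega> \<in> space (sample_space m). 5/4 * \<epsilon> \<le> \<bar>est K MM P m \<epsilon> i \<omega> - \<mu> i\<bar>}
    \<le> ennreal (2 * exp (- (t\<^sup>2 * Z / (4 * a))))"
proof -
  have a1: "1 \<le> a" and t0: "0 < t" and eps1: "\<epsilon> \<le> 1"
    using trunc_schedule[OF l] unfolding \<epsilon>_def a_def t_def by auto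
  define tu where "tu = 5/4 * \<epsilon>"
  have ttu: "t \<le> tu" and tu2: "tu \<le> 2" using eps1 by (auto simp: t_def tu_def)
  let ?\<Omega> = "sample_space m"
  let ?M = "\<lambda>x. arm_law q P Yk (fst x)"
  define S where "S \<omega> = (\<Sum>x\<in>sample_index m. trunc_term a i (fst x) (\<omega> x))" for \<omega>
  define ES where "ES = (\<Sum>x\<in>sample_index m. integral\<^sup>L (?M x) (trunc_term a i (fst x)))"
  have K_x: "fst x < K" if "x \<in> sample_index m" for x using that by (auto simp: sample_index_def)
  have bnd: "AE y in ?M x. 0 \<le> trunc_term a i (fst x) y \<and> trunc_term a i (fst x) y \<le> a"
    and Ew: "integral\<^sup>L (?M x) (trunc_term a i (fst x)) \<le> 1 / MM i (fst x)"
    if "x \<in> sample_index m" for x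
    using trunc_term_bounds(1,2)[OF i K_x[OF that] a1] by auto
  note tails = chernoff_PiM_tails[where M = ?M and I = "sample_index m"
      and X = "\<lambda>x. trunc_term a i (fst x)" and w = "\<lambda>x. 1 / MM i (fst x)" and a = a,
      OF prob_space_arm_law finite_sample_index measurable_trunc_term bnd Ew,
      folded sample_space_def sample_weight_eq Z_def S_def ES_def]
  have bias: "0 \<le> \<mu> i * Z - ES" "\<mu> i * Z - ES \<le> (tu - t) * Z"
    using expected_sum_trunc_terms[OF i a1, of m] by (simp_all add: Z_def ES_def t_def tu_def)
  \<comment> \<open>the downward bias of at most \<open>(tu - t) Z\<close> is absorbed by the smaller lower deviation \<open>t\<close>\<close>
  have "{\<omega> \<in> space ?\<Omega>. tu \<le> \<bar>est K MM P m \<epsilon> i \<omega> - \<mu> i\<bar>}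
      \<subseteq> {\<omega> \<in> space ?\<Omega>. tu * Z \<le> S \<omega> - ES} \<union> {\<omega> \<in> space ?\<Omega>. t * Z \<le> ES - S \<omega>}"
  proof safe
    fix \<omega> assume "\<omega> \<in> space ?\<Omega>" and dev: "tu \<le> \<bar>est K MM P m \<epsilon> i \<omega> - \<mu> i\<bar>"
      and "\<not> t * Z \<le> ES - S \<omega>"
    have "est K MM P m \<epsilon> i \<omega> - \<mu> i = (S \<omega> - \<mu> i * Z) / Z"
      using Z by (simp add: est_eq_trunc_terms S_def a_def Z_def diff_divide_distrib)
    hence "tu * Z \<le> \<bar>S \<omega> - \<mu> i * Z\<bar>" using dev Z by (simp add: abs_divide pos_le_divide_eq)
    thus "tu * Z \<le> S \<omega> - ES" using bias \<open>\<not> t * Z \<le> ES - S \<omega>\<close> by (auto simp: algebra_simps)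
  qed
  hence "emeasure ?\<Omega> {\<omega> \<in> space ?\<Omega>. tu \<le> \<bar>est K MM P m \<epsilon> i \<omega> - \<mu> i\<bar>}
      \<le> emeasure ?\<Omega> ({\<omega> \<in> space ?\<Omega>. tu * Z \<le> S \<omega> - ES} \<union> {\<omega> \<in> space ?\<Omega>. t * Z \<le> ES - S \<omega>})"
    by (intro emeasure_mono) (use measurable_sum_trunc_terms in \<open>auto simp: S_def[abs_def]\<close>)
  also have "\<dots> \<le> emeasure ?\<Omega> {\<omega> \<in> space ?\<Omega>. tu * Z \<le> S \<omega> - ES} + emeasure ?\<Omega> {\<omega> \<in> space ?\<Omega>. t * Z \<le> ES - S \<omega>}"
    by (rule emeasure_subadditive) (use measurable_sum_trunc_terms in \<open>auto simp: S_def[abs_def]\<close>)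
  also have "\<dots> \<le> ennreal (exp (- (tu\<^sup>2 * Z / (4 * a)))) + ennreal (exp (- (t\<^sup>2 * Z / (4 * a))))"
    using t0 ttu tu2 a1 by (intro add_mono tails) auto
  also have "\<dots> \<le> ennreal (exp (- (t\<^sup>2 * Z / (4 * a)))) + ennreal (exp (- (t\<^sup>2 * Z / (4 * a))))"
    using t0 ttu Z a1 by (intro add_mono ennreal_leI order_refl) (auto intro!: divide_right_mono mult_right_mono power_mono)
  finally show ?thesis by (simp add: tu_def ennreal_plus[symmetric] del: ennreal_plus)
qed

subsection \<open>One phase of SRIS\<close>

abbreviation "phase l R \<equiv> sris_phase K q P Yk nu T l R"
abbreviation "run l \<equiv> sris_run K q P Yk nu T l"

lemma phase_eq_distr:
  assumes "\<not> card R \<le> 1"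
  shows "phase l R = distr (sample_space (pulls (nu R) T l)) (count_space UNIV)
           (\<lambda>\<omega>. eliminate l R (\<lambda>k. est K MM P (pulls (nu R) T l) ((1/2) ^ (l - 1)) k \<omega>))"
proof -
  have e: "(\<lambda>(j, s). arm_law q P Yk j) = (\<lambda>x. arm_law q P Yk (fst x))" by auto
  have "phase l R = (let m = pulls (nu R) T l; I = {(j, s). j < K \<and> s < m j} in
      distr (PiM I (\<lambda>(j, s). arm_law q P Yk j)) (count_space UNIV)
        (\<lambda>\<omega>. eliminate l R (\<lambda>k. est K MM P m ((1/2) ^ (l - 1)) k \<omega>)))"
    unfolding sris_phase_def by (rule if_not_P[OF assms])
  thus ?thesis unfolding Let_def e sample_space_def sample_index_def .
qed

lemma phase_eq_return: "card R \<le> 1 \<Longrightarrow> phase l R = return (count_space UNIV) R"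
  by (simp add: sris_phase_def)

lemma measurable_eliminate_est:
  "finite R \<Longrightarrow> (\<lambda>\<omega>. eliminate l R (\<lambda>k. est K MM P m \<epsilon> k \<omega>)) \<in> measurable (sample_space m) (count_space UNIV)"
  by (rule measurable_eliminate[OF _ measurable_est])

lemma tau_nonneg: "0 \<le> tau T l"
  using hlog_pos by (simp add: tau_def)

lemma Rstar_arms: "kstar \<in> Rstar K \<Delta> d" "Rstar K \<Delta> d \<noteq> {}" "Rstar K \<Delta> d \<subseteq> {..<K}"
  using kstar gap_kstar by (auto simp: Rstar_def gap_level_def)

lemma good_active_subset_Rstar:
  assumes good: "good_active l R" and k': "k' < K" "k' \<noteq> kstar"
    and kmin: "\<And>i. i < K \<Longrightarrow> i \<noteq> kstar \<Longrightarrow> int l \<le> lev i \<Longrightarrow> lev k' \<le> lev i"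
  shows "R \<subseteq> Rstar K \<Delta> (\<Delta> k')"
proof
  fix i assume i: "i \<in> R"
  have iK: "i < K" using i good by (auto simp: good_active_def)
  show "i \<in> Rstar K \<Delta> (\<Delta> k')"
  proof (cases "i = kstar")
    case False
    have "lev k' \<le> lev i" using kmin[OF iK False] i False good by (auto simp: good_active_def)
    thus ?thesis using iK gap_level_eq[OF iK False] gap_level_eq[OF k'] by (auto simp: Rstar_def)
  qed (use Rstar_arms in auto)
qed

lemma sample_weight_ge:
  assumes R: "R \<noteq> {}" "R \<subseteq> {..<K}" and i: "i \<in> R"
  shows "tau T l * vstar K MM c B R \<le> (\<Sum>j<K. real (pulls (nu R) T l j) / MM i j)"
proof -
  have iK: "i < K" using i R by auto
  have "tau T l * vstar K MM c B R = tau T l * alloc_obj K MM R (nu R)"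
    using nu[OF R] by (simp add: is_alloc_maximizer_def)
  also have "\<dots> \<le> tau T l * (\<Sum>j<K. nu R j / MM i j)"
    unfolding alloc_obj_def using finite_subset[OF R(2)] i tau_nonneg by (intro mult_left_mono Min_le) auto
  also have "\<dots> = (\<Sum>j<K. (nu R j * tau T l) / MM i j)"
    by (simp add: sum_distrib_left mult.commute)
  also have "\<dots> \<le> (\<Sum>j<K. real (pulls (nu R) T l j) / MM i j)"
  proof (intro sum_mono divide_right_mono)
    fix j assume "j \<in> {..<K}"
    thus "0 \<le> MM i j" using MM_ge_1[OF iK, of j] by simp
    show "nu R j * tau T l \<le> real (pulls (nu R) T l j)" unfolding pulls_def by linarith
  qed
  finally show ?thesis .
qed

lemma phase_estimate_deviation_le:
  assumes l: "1 \<le> l" and good: "good_active (l - 1) R" and i: "i \<in> R"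
    and k': "k' < K" "k' \<noteq> kstar" "int (l - 1) \<le> lev k'"
    and kmin: "\<And>i. i < K \<Longrightarrow> i \<noteq> kstar \<Longrightarrow> int (l - 1) \<le> lev i \<Longrightarrow> lev k' \<le> lev i"
  defines "m \<equiv> pulls (nu R) T l" and "\<epsilon> \<equiv> (1/2::real) ^ (l - 1)"
  shows "emeasure (sample_space m) {\<omega> \<in> space (sample_space m). 5/4 * \<epsilon> \<le> \<bar>est K MM P m \<epsilon> i \<omega> - \<mu> i\<bar>}
     \<le> ennreal (2 * exp (- real T / (2 * Hterm K MM c B \<Delta> k' * hn)))"
proof -
  define a where "a = 2 * ln (2 / \<epsilon>)"
  define t where "t = 5/4 * \<epsilon> - exp (1 - a)"
  define Z where "Z = (\<Sum>j<K. real (m j) / MM i j)"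
  define v' where "v' = vstar K MM c B (Rstar K \<Delta> (\<Delta> k'))"
  have R: "R \<noteq> {}" "R \<subseteq> {..<K}" using good by (auto simp: good_active_def)
  have v': "0 < v'" "v' \<le> 1" unfolding v'_def using vstar_pos_le_1_arms[OF Rstar_arms(2,3)] by auto
  have "v' \<le> vstar K MM c B R" unfolding v'_def
    by (rule vstar_antimono_arms[OF R(1) good_active_subset_Rstar[OF good k'(1,2) kmin] Rstar_arms(3)])
  hence "tau T l * v' \<le> tau T l * vstar K MM c B R" using tau_nonneg by (rule mult_left_mono)
  also have "\<dots> \<le> Z" unfolding Z_def m_def by (rule sample_weight_ge[OF R i])
  finally have ZT: "real T / (real l * hn) * v' \<le> Z" by (simp add: tau_def)
  moreover have "0 < real T / (real l * hn) * v'" using v' T_pos hlog_pos l by simp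
  ultimately have "0 < Z" by linarith
  have "emeasure (sample_space m) {\<omega> \<in> space (sample_space m). 5/4 * \<epsilon> \<le> \<bar>est K MM P m \<epsilon> i \<omega> - \<mu> i\<bar>}
      \<le> ennreal (2 * exp (- (t\<^sup>2 * Z / (4 * a))))"
    unfolding \<epsilon>_def a_def t_def Z_def using est_deviation[OF l] i R \<open>0 < Z\<close> by (auto simp: Z_def)
  also have "\<dots> \<le> ennreal (2 * exp (- real T / (2 * Hterm K MM c B \<Delta> k' * hn)))"
    using phase_exponent_le[OF l gap_pos[OF k'(1,2)] gap_le_1 _ v' _ hlog_pos ZT] k'(3) l T_pos
    by (intro ennreal_leI mult_left_mono) (auto simp: Hterm_def v'_def lev_def \<epsilon>_def a_def t_def of_nat_diff)
  finally show ?thesis .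
qed

lemma phase_not_good_le:
  assumes l: "1 \<le> l" and good: "good_active (l - 1) R"
    and k': "k' < K" "k' \<noteq> kstar" "int (l - 1) \<le> lev k'"
    and kmin: "\<And>i. i < K \<Longrightarrow> i \<noteq> kstar \<Longrightarrow> int (l - 1) \<le> lev i \<Longrightarrow> lev k' \<le> lev i"
  shows "emeasure (phase l R) {R'. \<not> good_active l R'}
     \<le> ennreal (2 * real K * exp (- real T / (2 * Hterm K MM c B \<Delta> k' * hn)))"
proof (cases "card R \<le> 1")
  case True
  have "R \<noteq> {}" "finite R" "kstar \<in> R" using good finite_subset by (auto simp: good_active_def)
  hence "card R = 1" using True by (simp add: Suc_le_eq card_gt_0_iff le_antisym)
  hence "R = {kstar}" using \<open>kstar \<in> R\<close> by (auto simp: card_Suc_eq)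
  moreover have "good_active l {kstar}" using kstar by (simp add: good_active_def)
  ultimately show ?thesis using True by (simp add: phase_eq_return)
next
  case False
  define m where "m = pulls (nu R) T l"
  define \<epsilon> :: real where "\<epsilon> = (1/2) ^ (l - 1)"
  define E where "E = exp (- real T / (2 * Hterm K MM c B \<Delta> k' * hn))"
  define Dev where "Dev i = {\<omega> \<in> space (sample_space m). 5/4 * \<epsilon> \<le> \<bar>est K MM P m \<epsilon> i \<omega> - \<mu> i\<bar>}" for i
  have R: "R \<subseteq> {..<K}" and finR: "finite R"
    using good finite_subset by (auto simp: good_active_def)
  have Dev_sets: "Dev i \<in> sets (sample_space m)" for i
    unfolding Dev_def using measurable_est by measurable
  let ?F = "\<lambda>\<omega>. eliminate l R (\<lambda>k. est K MM P m \<epsilon> k \<omega>)"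
  have "?F -` {R'. \<not> good_active l R'} \<inter> space (sample_space m) \<subseteq> (\<Union>i\<in>R. Dev i)"
  proof safe
    fix \<omega> assume \<omega>: "\<omega> \<in> space (sample_space m)" and bad: "\<not> good_active l (?F \<omega>)"
    show "\<omega> \<in> (\<Union>i\<in>R. Dev i)"
    proof (rule ccontr)
      assume "\<omega> \<notin> (\<Union>i\<in>R. Dev i)"
      hence "\<bar>est K MM P m \<epsilon> i \<omega> - \<mu> i\<bar> < 5/4 * (1/2)^(l-1)" if "i \<in> R" for i
        using \<omega> that by (auto simp: Dev_def \<epsilon>_def not_le)
      hence "good_active l (?F \<omega>)" by (rule good_active_eliminate[OF l good])
      with bad show False ..
    qed
  qed
  hence "emeasure (phase l R) {R'. \<not> good_active l R'} \<le> emeasure (sample_space m) (\<Union>i\<in>R. Dev i)"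
    unfolding phase_eq_distr[OF False] m_def[symmetric] \<epsilon>_def[symmetric]
    using finR Dev_sets
    by (subst emeasure_distr[OF measurable_eliminate_est[OF finR]]) (auto intro!: emeasure_mono)
  also have "\<dots> \<le> (\<Sum>i\<in>R. emeasure (sample_space m) (Dev i))"
    by (rule emeasure_subadditive_finite[OF finR]) (auto intro: Dev_sets)
  also have "\<dots> \<le> (\<Sum>i\<in>R. ennreal (2 * E))"
    unfolding Dev_def m_def \<epsilon>_def E_def
    by (intro sum_mono phase_estimate_deviation_le[OF l good _ k' kmin])
  also have "\<dots> = ennreal (real (card R) * (2 * E))" by (simp add: E_def ennreal_mult' ennreal_of_nat_eq_real_of_nat)
  also have "\<dots> \<le> ennreal (2 * real K * E)"
    using card_mono[OF _ R] by (intro ennreal_leI) (simp add: E_def mult_right_mono mult.left_commute)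
  finally show ?thesis by (simp add: E_def)
qed

lemma prob_space_phase: "prob_space (phase l R)"
  and sets_phase: "sets (phase l R) = sets (count_space UNIV)"
proof -
  have "prob_space (phase l R) \<and> sets (phase l R) = sets (count_space UNIV)"
  proof (cases "card R \<le> 1")
    case True thus ?thesis by (simp add: phase_eq_return prob_space_return)
  next
    case False
    hence "finite R" using card.infinite by force
    thus ?thesis unfolding phase_eq_distr[OF False]
      using prob_space.prob_space_distr[OF prob_space_sample_space measurable_eliminate_est] by simp
  qed
  thus "prob_space (phase l R)" "sets (phase l R) = sets (count_space UNIV)" by auto
qed

lemma emeasure_phase_eq_0:
  assumes "card R \<le> 1 \<Longrightarrow> R \<notin> A"
    and "\<And>R'. \<not> card R \<le> 1 \<Longrightarrow> R' \<subseteq> R \<Longrightarrow> R' \<noteq> {} \<Longrightarrow> R' \<notin> A"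
  shows "emeasure (phase l R) A = 0"
proof (cases "card R \<le> 1")
  case True thus ?thesis using assms(1) by (simp add: phase_eq_return)
next
  case False
  hence fin: "finite R" and ne: "R \<noteq> {}" using card.infinite by force+
  let ?m = "pulls (nu R) T l"
  let ?F = "\<lambda>\<omega>. eliminate l R (\<lambda>k. est K MM P ?m ((1/2) ^ (l - 1)) k \<omega>)"
  have "?F \<omega> \<notin> A" for \<omega>
  proof (rule assms(2)[OF False])
    show "?F \<omega> \<subseteq> R" by (auto simp: eliminate_def)
    let ?Y = "\<lambda>k. est K MM P ?m ((1/2) ^ (l - 1)) k \<omega>"
    have "Max (?Y ` R) \<in> ?Y ` R" using fin ne by (intro Max_in) auto
    thus "?F \<omega> \<noteq> {}" by (auto simp: eliminate_def)
  qed
  hence "?F -` A \<inter> space (sample_space ?m) = {}" by auto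
  thus ?thesis unfolding phase_eq_distr[OF False]
    by (subst emeasure_distr[OF measurable_eliminate_est[OF fin]]) simp_all
qed

lemma sets_run: "sets (run l) = sets (count_space UNIV)" and prob_space_run: "prob_space (run l)"
proof -
  have "sets (run l) = sets (count_space UNIV) \<and> prob_space (run l)"
  proof (induction l)
    case 0 thus ?case by (simp add: prob_space_return)
  next
    case (Suc l)
    have kern: "phase (Suc l) \<in> measurable (run l) (subprob_algebra (count_space UNIV))"
      by (simp add: measurable_cong_sets[OF Suc.IH[THEN conjunct1] refl] space_subprob_algebra
          sets_phase prob_space_imp_subprob_space[OF prob_space_phase])
    have ne: "space (run l) \<noteq> {}" using Suc.IH by (simp add: prob_space.not_empty)
    show ?case
    proof
      show "sets (run (Suc l)) = sets (count_space UNIV)"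
        by (simp del: sets_count_space, rule sets_bind[OF _ ne]) (simp add: sets_phase)
      show "prob_space (run (Suc l))"
        by (simp, rule prob_space.prob_space_bind[OF Suc.IH[THEN conjunct2] _ kern]) (simp add: prob_space_phase)
    qed
  qed
  thus "sets (run l) = sets (count_space UNIV)" "prob_space (run l)" by auto
qed

lemma emeasure_run_Suc:
  "emeasure (run (Suc l)) A = (\<integral>\<^sup>+R. emeasure (phase (Suc l) R) A \<partial>run l)"
proof -
  have ne: "space (run l) \<noteq> {}" using prob_space_run by (simp add: prob_space.not_empty)
  have kern: "phase (Suc l) \<in> measurable (run l) (subprob_algebra (count_space UNIV))"
    by (simp add: measurable_cong_sets[OF sets_run refl] space_subprob_algebra
        sets_phase prob_space_imp_subprob_space[OF prob_space_phase])
  show ?thesis by (simp, rule emeasure_bind[OF ne kern]) simp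
qed

lemma emeasure_run_antimono:
  assumes closed: "\<And>l R. R \<notin> A \<Longrightarrow> emeasure (phase l R) A = 0" and "l \<le> l'"
  shows "emeasure (run l') A \<le> emeasure (run l) A"
  using assms(2)
proof (induction l' rule: dec_induct)
  case (step l')
  have "emeasure (run (Suc l')) A \<le> (\<integral>\<^sup>+R. indicator A R \<partial>run l')"
    unfolding emeasure_run_Suc
  proof (intro nn_integral_mono)
    fix R show "emeasure (phase (Suc l') R) A \<le> indicator A R"
      using prob_space.emeasure_le_1[OF prob_space_phase] closed by (cases "R \<in> A") auto
  qed
  also have "\<dots> = emeasure (run l') A" by (simp add: sets_run)
  finally show ?case using step.IH by simp
qed simp

lemma emeasure_run_degenerate: "emeasure (run l) {R. R = {} \<or> \<not> R \<subseteq> {..<K}} = 0"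
proof -
  have "emeasure (run l) {R. R = {} \<or> \<not> R \<subseteq> {..<K}} \<le> emeasure (run 0) {R. R = {} \<or> \<not> R \<subseteq> {..<K}}"
    by (rule emeasure_run_antimono) (auto intro: emeasure_phase_eq_0)
  also have "\<dots> = 0" using kstar by (auto simp: indicator_def)
  finally show ?thesis by simp
qed

lemma Hterm_pos: assumes "k < K" "k \<noteq> kstar" shows "0 < Hterm K MM c B \<Delta> k"
proof -
  have D: "0 < \<Delta> k" "\<Delta> k \<le> 1" using gap_pos[OF assms] gap_le_1 by auto
  hence "0 < log 2 (10 / \<Delta> k)" by (simp add: field_simps)
  thus ?thesis using D vstar_pos_le_1_arms[OF Rstar_arms(2,3), of "\<Delta> k"] unfolding Hterm_def
    by (intro divide_pos_pos mult_pos_pos zero_less_power) auto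
qed

text \<open>Phase \<open>l\<close> is governed by the hardest arm still possibly active, i.e. an arm \<open>k'\<close> of
  minimal level among those of level at least \<open>l - 1\<close>.\<close>
lemma run_not_good_le:
  assumes H: "0 < H"
    and hard: "\<And>l'. 1 \<le> l' \<Longrightarrow> l' \<le> l \<Longrightarrow> \<exists>k'. k' < K \<and> k' \<noteq> kstar \<and> int (l' - 1) \<le> lev k' \<and>
       (\<forall>i. i < K \<longrightarrow> i \<noteq> kstar \<longrightarrow> int (l' - 1) \<le> lev i \<longrightarrow> lev k' \<le> lev i) \<and> Hterm K MM c B \<Delta> k' \<le> H"
  shows "emeasure (run l) {R. \<not> good_active l R} \<le> ennreal (real l * (2 * real K * exp (- real T / (2 * H * hn))))"
  using hard
proof (induction l)
  case 0
  have "good_active 0 {..<K}" using kstar lev_ge_3 by (fastforce simp: good_active_def)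
  thus ?case by simp
next
  case (Suc l)
  define E where "E = 2 * real K * exp (- real T / (2 * H * hn))"
  have E0: "0 \<le> E" by (simp add: E_def)
  obtain k' where k': "k' < K" "k' \<noteq> kstar" "int (Suc l - 1) \<le> lev k'"
    "\<And>i. i < K \<Longrightarrow> i \<noteq> kstar \<Longrightarrow> int (Suc l - 1) \<le> lev i \<Longrightarrow> lev k' \<le> lev i"
    and Hk': "Hterm K MM c B \<Delta> k' \<le> H"
    using Suc.prems[of "Suc l"] by auto
  have step: "emeasure (phase (Suc l) R) {R'. \<not> good_active (Suc l) R'} \<le> ennreal E" if "good_active l R" for R
  proof -
    have "emeasure (phase (Suc l) R) {R'. \<not> good_active (Suc l) R'}
        \<le> ennreal (2 * real K * exp (- real T / (2 * Hterm K MM c B \<Delta> k' * hn)))"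
      by (rule phase_not_good_le) (use that k' in auto)
    also have "\<dots> \<le> ennreal E" unfolding E_def
      using Hterm_pos[OF k'(1,2)] Hk' hlog_pos
      by (intro ennreal_leI mult_left_mono exp_mono) (auto intro!: divide_left_mono mult_right_mono)
    finally show ?thesis .
  qed
  have "emeasure (run (Suc l)) {R. \<not> good_active (Suc l) R}
      \<le> (\<integral>\<^sup>+R. indicator {R. \<not> good_active l R} R + ennreal E \<partial>run l)"
    unfolding emeasure_run_Suc
  proof (intro nn_integral_mono)
    fix R show "emeasure (phase (Suc l) R) {R'. \<not> good_active (Suc l) R'} \<le> indicator {R. \<not> good_active l R} R + ennreal E"
      using step prob_space.emeasure_le_1[OF prob_space_phase] by (cases "good_active l R") (auto intro: add_increasing2)
  qed
  also have "\<dots> = (\<integral>\<^sup>+R. indicator {R. \<not> good_active l R} R \<partial>run l) + (\<integral>\<^sup>+R. ennreal E \<partial>run l)"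
    by (rule nn_integral_add) (simp_all add: measurable_cong_sets[OF sets_run refl])
  also have "\<dots> = emeasure (run l) {R. \<not> good_active l R} + ennreal E"
    using prob_space.emeasure_space_1[OF prob_space_run] by (simp add: sets_run)
  also have "\<dots> \<le> ennreal (real l * E) + ennreal E"
    unfolding E_def using Suc.prems by (intro add_mono Suc.IH order_refl) auto
  also have "\<dots> = ennreal (real (Suc l) * E)"
    using E0 by (simp add: ennreal_plus[symmetric] algebra_simps del: ennreal_plus)
  finally show ?case by (simp add: E_def)
qed

lemma exists_min_lev:
  assumes "k < K" "k \<noteq> kstar" "int l \<le> lev k"
  obtains k0 where "k0 < K" "k0 \<noteq> kstar" "int l \<le> lev k0"
    "\<And>i. i < K \<Longrightarrow> i \<noteq> kstar \<Longrightarrow> int l \<le> lev i \<Longrightarrow> lev k0 \<le> lev i"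
proof -
  define S where "S = {i. i < K \<and> i \<noteq> kstar \<and> int l \<le> lev i}"
  have "finite S" "S \<noteq> {}" using assms by (auto simp: S_def)
  hence "Min (lev ` S) \<in> lev ` S" by (intro Min_in) auto
  then obtain k0 where "k0 \<in> S" "lev k0 = Min (lev ` S)" by auto
  thus ?thesis using that \<open>finite S\<close> by (auto simp: S_def)
qed

text \<open>Arm \<open>k\<close> is settled by the end of phase \<open>lev k + 1\<close>; up to then only arms at least as
  hard as \<open>k\<close> determine the exponent.\<close>
lemma run_not_good_at_level:
  assumes k: "k < K" "k \<noteq> kstar"
    and H: "\<And>i. i < K \<Longrightarrow> i \<noteq> kstar \<Longrightarrow> \<Delta> k \<le> \<Delta> i \<Longrightarrow> Hterm K MM c B \<Delta> i \<le> H"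
  defines "L \<equiv> nat (lev k + 1)"
  shows "emeasure (run L) {R. \<not> good_active L R} \<le> ennreal (real L * (2 * real K * exp (- real T / (2 * H * hn))))"
proof (rule run_not_good_le)
  show "0 < H" using H[OF k order_refl] Hterm_pos[OF k] by linarith
  fix l' assume l': "1 \<le> l'" "l' \<le> L"
  have ll: "int (l' - 1) \<le> lev k" using l' lev_ge_3[OF k] by (simp add: L_def)
  obtain k0 where k0: "k0 < K" "k0 \<noteq> kstar" "int (l' - 1) \<le> lev k0"
      and min: "\<And>i. i < K \<Longrightarrow> i \<noteq> kstar \<Longrightarrow> int (l' - 1) \<le> lev i \<Longrightarrow> lev k0 \<le> lev i"
    using exists_min_lev[OF k ll] by blast
  show "\<exists>k'. k' < K \<and> k' \<noteq> kstar \<and> int (l' - 1) \<le> lev k' \<and>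
       (\<forall>i. i < K \<longrightarrow> i \<noteq> kstar \<longrightarrow> int (l' - 1) \<le> lev i \<longrightarrow> lev k' \<le> lev i) \<and> Hterm K MM c B \<Delta> k' \<le> H"
  proof (cases "\<Delta> k \<le> \<Delta> k0")
    case True thus ?thesis using k0 min H[OF k0(1,2)] by blast
  next
    case False
    hence "lev k0 = lev k" using lev_antimono[OF k0(1,2), of k] min[OF k ll] by linarith
    thus ?thesis using k ll min H[OF k order_refl] by (intro exI[of _ k]) auto
  qed
qed

subsection \<open>The returned arm\<close>

abbreviation "out \<equiv> sris_output K q P Yk nu T"

lemma measurable_pmf_of_set_kernel:
  "(\<lambda>R. measure_pmf (pmf_of_set R)) \<in> measurable (run l) (subprob_algebra (count_space UNIV))"
  by (simp add: measurable_cong_sets[OF sets_run refl] space_subprob_algebra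
      prob_space_imp_subprob_space[OF prob_space_measure_pmf])

lemma emeasure_out: "emeasure out A = (\<integral>\<^sup>+R. emeasure (measure_pmf (pmf_of_set R)) A \<partial>run (n_phases T))"
proof -
  have "space (run (n_phases T)) \<noteq> {}" using prob_space_run by (simp add: prob_space.not_empty)
  thus ?thesis unfolding sris_output_def by (rule emeasure_bind[OF _ measurable_pmf_of_set_kernel]) simp
qed

lemma prob_space_out: "prob_space out"
  unfolding sris_output_def
  by (rule prob_space.prob_space_bind[OF prob_space_run _ measurable_pmf_of_set_kernel])
     (simp add: prob_space_measure_pmf)

lemma sets_out: "sets out = UNIV"
proof -
  have "space (run (n_phases T)) \<noteq> {}" using prob_space_run by (simp add: prob_space.not_empty)
  hence "sets out = sets (count_space (UNIV :: nat set))" unfolding sris_output_def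
    by (rule sets_bind[rotated]) simp
  thus ?thesis by simp
qed

lemma emeasure_out_arm_le: "emeasure out {k} \<le> emeasure (run (n_phases T)) {R. k \<in> R}"
proof -
  let ?B = "{R. R = {} \<or> \<not> R \<subseteq> {..<K}}"
  have "emeasure out {k} \<le> (\<integral>\<^sup>+R. indicator ({R. k \<in> R} \<union> ?B) R \<partial>run (n_phases T))"
    unfolding emeasure_out
  proof (intro nn_integral_mono)
    fix R :: "nat set"
    show "emeasure (measure_pmf (pmf_of_set R)) {k} \<le> indicator ({R. k \<in> R} \<union> ?B) R"
    proof (cases "R \<in> {R. k \<in> R} \<union> ?B")
      case False
      hence "R \<noteq> {}" "finite R" "k \<notin> R" using finite_subset[of R "{..<K}"] by auto
      thus ?thesis by (simp add: emeasure_pmf_single)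
    qed (simp add: measure_pmf.emeasure_le_1)
  qed
  also have "\<dots> = emeasure (run (n_phases T)) ({R. k \<in> R} \<union> ?B)" by (simp add: sets_run)
  also have "\<dots> \<le> emeasure (run (n_phases T)) {R. k \<in> R} + emeasure (run (n_phases T)) ?B"
    by (rule emeasure_subadditive) (simp_all add: sets_run)
  finally show ?thesis using emeasure_run_degenerate by simp
qed

lemma emeasure_out_not_best_le:
  "emeasure out (UNIV - {kstar}) \<le> emeasure (run (n_phases T)) {R. R \<noteq> {kstar}}"
proof -
  have "emeasure out (UNIV - {kstar}) \<le> (\<integral>\<^sup>+R. indicator {R. R \<noteq> {kstar}} R \<partial>run (n_phases T))"
    unfolding emeasure_out
  proof (intro nn_integral_mono)
    fix R :: "nat set"
    show "emeasure (measure_pmf (pmf_of_set R)) (UNIV - {kstar}) \<le> indicator {R. R \<noteq> {kstar}} R"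
      using measure_pmf.emeasure_le_1 by (cases "R = {kstar}") (auto simp: pmf_of_set_singleton)
  qed
  thus ?thesis by (simp add: sets_run)
qed

lemma lev_lt_n_phases:
  assumes "k < K" "k \<noteq> kstar" "10 / sqrt (real T) \<le> \<Delta> k"
  shows "nat (lev k + 1) \<le> n_phases T"
proof -
  have D: "0 < \<Delta> k" using gap_pos assms by auto
  have sT: "0 < sqrt (real T)" using T_pos by simp
  have "10 / \<Delta> k \<le> sqrt (real T)" using assms(3) D sT by (simp add: field_simps)
  hence "log 2 (10 / \<Delta> k) \<le> log 2 (sqrt (real T))" using D sT by (subst log_le_cancel_iff) auto
  moreover have "log 2 (10 * sqrt (real T)) = log 2 10 + log 2 (sqrt (real T))" using sT by (simp add: log_mult)
  moreover have "3 \<le> log 2 (10::real)" by (rule log2_ge_3) simp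
  ultimately have "lev k + 1 \<le> \<lceil>log 2 (10 * sqrt (real T))\<rceil>" unfolding lev_def by linarith
  thus ?thesis unfolding n_phases_def by simp
qed

lemma lev_le_log: assumes "k < K" "k \<noteq> kstar" shows "real (nat (lev k + 1)) \<le> log 2 (20 / \<Delta> k)"
proof -
  have "log 2 (20 / \<Delta> k) = log 2 (2 * (10 / \<Delta> k))" by simp
  also have "\<dots> = 1 + log 2 (10 / \<Delta> k)" using gap_pos[OF assms] by (subst log_mult) auto
  finally show ?thesis using lev_ge_3[OF assms] unfolding lev_def by simp
qed

lemma measure_out_le:
  assumes k: "k < K" "k \<noteq> kstar"
    and H: "\<And>i. i < K \<Longrightarrow> i \<noteq> kstar \<Longrightarrow> \<Delta> k \<le> \<Delta> i \<Longrightarrow> Hterm K MM c B \<Delta> i \<le> H"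
    and A: "emeasure out A \<le> emeasure (run (nat (lev k + 1))) {R. \<not> good_active (nat (lev k + 1)) R}"
  shows "measure out A \<le> 2 * real K ^ 2 * log 2 (20 / \<Delta> k) * exp (- real T / (2 * H * hn))"
proof -
  interpret prob_space out by (rule prob_space_out)
  define E where "E = 2 * real K * exp (- real T / (2 * H * hn))"
  have "emeasure out A \<le> ennreal (real (nat (lev k + 1)) * E)"
    using A run_not_good_at_level[OF k H] unfolding E_def by (rule order_trans)
  hence "measure out A \<le> real (nat (lev k + 1)) * E"
    by (simp add: emeasure_eq_measure ennreal_le_iff E_def)
  also have "\<dots> \<le> log 2 (20 / \<Delta> k) * (real K * E)"
    using lev_le_log[OF k] k by (intro mult_mono) (auto simp: E_def)
  finally show ?thesis by (simp add: E_def power2_eq_square algebra_simps)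
qed

lemma measure_out_arm_le:
  assumes k: "k < K" "k \<noteq> kstar" "10 / sqrt (real T) \<le> \<Delta> k"
  shows "measure out {k} \<le> 2 * real K ^ 2 * log 2 (20 / \<Delta> k) *
    exp (- real T / (2 * Max (Hterm K MM c B \<Delta> ` {l. l < K \<and> \<Delta> l \<ge> \<Delta> k}) * hn))"
proof (rule measure_out_le[OF k(1,2)])
  show "Hterm K MM c B \<Delta> i \<le> Max (Hterm K MM c B \<Delta> ` {l. l < K \<and> \<Delta> l \<ge> \<Delta> k})"
    if "i < K" "\<Delta> k \<le> \<Delta> i" for i using that by (intro Max_ge) auto
  have "emeasure out {k} \<le> emeasure (run (n_phases T)) {R. k \<in> R}" by (rule emeasure_out_arm_le)
  also have "\<dots> \<le> emeasure (run (nat (lev k + 1))) {R. k \<in> R}"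
    by (rule emeasure_run_antimono[OF _ lev_lt_n_phases[OF k]]) (auto intro: emeasure_phase_eq_0)
  also have "\<dots> \<le> emeasure (run (nat (lev k + 1))) {R. \<not> good_active (nat (lev k + 1)) R}"
    using k(1,2) lev_ge_3[OF k(1,2)] by (intro emeasure_mono) (auto simp: good_active_def sets_run)
  finally show "emeasure out {k} \<le> \<dots>" .
qed

lemma good_active_beyond_levels:
  assumes "good_active l R" and "\<And>i. i < K \<Longrightarrow> i \<noteq> kstar \<Longrightarrow> lev i < int l"
  shows "R = {kstar}"
  using assms by (force simp: good_active_def)

lemma measure_out_not_best_le:
  assumes K: "2 \<le> K" and big: "\<And>k. k < K \<Longrightarrow> k \<noteq> kstar \<Longrightarrow> 10 / sqrt (real T) \<le> \<Delta> k"
  defines "D \<equiv> Min (\<Delta> ` {k. k < K \<and> k \<noteq> kstar})"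
  shows "measure out (UNIV - {kstar}) \<le> 2 * real K ^ 2 * log 2 (20 / D) *
    exp (- real T / (2 * Max (Hterm K MM c B \<Delta> ` {k. k < K \<and> k \<noteq> kstar}) * hn))"
proof -
  have "{k. k < K \<and> k \<noteq> kstar} \<noteq> {}"
  proof (cases "kstar = 0")
    case True thus ?thesis using K by (auto intro!: exI[of _ 1])
  qed (use kstar in \<open>auto intro!: exI[of _ 0]\<close>)
  hence "D \<in> \<Delta> ` {k. k < K \<and> k \<noteq> kstar}" unfolding D_def by (intro Min_in) auto
  then obtain km where km: "km < K" "km \<noteq> kstar" "\<Delta> km = D" by auto
  have D_le: "D \<le> \<Delta> i" if "i < K" "i \<noteq> kstar" for i unfolding D_def using that by (intro Min_le) auto
  show ?thesis unfolding km(3)[symmetric]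
  proof (rule measure_out_le[OF km(1,2)])
    show "Hterm K MM c B \<Delta> i \<le> Max (Hterm K MM c B \<Delta> ` {k. k < K \<and> k \<noteq> kstar})"
      if "i < K" "i \<noteq> kstar" for i using that by (intro Max_ge) auto
    have levs: "lev i < int (nat (lev km + 1))" if "i < K" "i \<noteq> kstar" for i
      using lev_antimono[OF km(1,2) D_le[OF that, folded km(3)]] lev_ge_3[OF km(1,2)] by simp
    have "R = {kstar}" if "good_active (nat (lev km + 1)) R" for R
      using good_active_beyond_levels[OF that levs] .
    hence sub: "{R. R \<noteq> {kstar}} \<subseteq> {R. \<not> good_active (nat (lev km + 1)) R}" by blast
    have "emeasure out (UNIV - {kstar}) \<le> emeasure (run (n_phases T)) {R. R \<noteq> {kstar}}"
      by (rule emeasure_out_not_best_le)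
    also have "\<dots> \<le> emeasure (run (nat (lev km + 1))) {R. R \<noteq> {kstar}}"
      by (rule emeasure_run_antimono[OF _ lev_lt_n_phases[OF km(1,2) big[OF km(1,2)]]])
         (auto intro: emeasure_phase_eq_0)
    also have "\<dots> \<le> emeasure (run (nat (lev km + 1))) {R. \<not> good_active (nat (lev km + 1)) R}"
      using sub by (intro emeasure_mono) (auto simp: sets_run)
    finally show "emeasure out (UNIV - {kstar}) \<le> \<dots>" .
  qed
qed

lemma regret_le:
  "(\<Sum>k\<in>{k. k < K \<and> k \<noteq> kstar}. \<Delta> k * measure out {k})
     \<le> 2 * real K ^ 2 *
        (\<Sum>k\<in>{k. k < K \<and> k \<noteq> kstar \<and> \<Delta> k \<ge> 10 / sqrt (real T)}.
            \<Delta> k * log 2 (20 / \<Delta> k) *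
            exp (- real T / (2 * Max (Hterm K MM c B \<Delta> ` {l. l < K \<and> \<Delta> l \<ge> \<Delta> k}) * hn)))
       + 10 / sqrt (real T) *
         (if \<exists>k. k < K \<and> k \<noteq> kstar \<and> \<Delta> k < 10 / sqrt (real T) then 1 else 0)"
proof -
  interpret O: prob_space out by (rule prob_space_out)
  define Big where "Big = {k. k < K \<and> k \<noteq> kstar \<and> \<Delta> k \<ge> 10 / sqrt (real T)}"
  define Small where "Small = {k. k < K \<and> k \<noteq> kstar \<and> \<Delta> k < 10 / sqrt (real T)}"
  have split: "{k. k < K \<and> k \<noteq> kstar} = Big \<union> Small" "Big \<inter> Small = {}" "finite Big" "finite Small"
    by (auto simp: Big_def Small_def)
  define bound where "bound k = 2 * real K ^ 2 * log 2 (20 / \<Delta> k) *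
      exp (- real T / (2 * Max (Hterm K MM c B \<Delta> ` {l. l < K \<and> \<Delta> l \<ge> \<Delta> k}) * hn))" for k
  have "(\<Sum>k\<in>{k. k < K \<and> k \<noteq> kstar}. \<Delta> k * measure out {k})
      = (\<Sum>k\<in>Big. \<Delta> k * measure out {k}) + (\<Sum>k\<in>Small. \<Delta> k * measure out {k})"
    unfolding split(1) by (rule sum.union_disjoint[OF split(3,4,2)])
  also have "\<dots> \<le> (\<Sum>k\<in>Big. \<Delta> k * bound k) + 10 / sqrt (real T) * (if Small \<noteq> {} then 1 else 0)"
  proof (rule add_mono)
    show "(\<Sum>k\<in>Big. \<Delta> k * measure out {k}) \<le> (\<Sum>k\<in>Big. \<Delta> k * bound k)"
      unfolding bound_def using gap_nonneg
      by (intro sum_mono mult_left_mono measure_out_arm_le) (auto simp: Big_def)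
    show "(\<Sum>k\<in>Small. \<Delta> k * measure out {k}) \<le> 10 / sqrt (real T) * (if Small \<noteq> {} then 1 else 0)"
    proof (cases "Small = {}")
      case False
      have "(\<Sum>k\<in>Small. \<Delta> k * measure out {k}) \<le> (\<Sum>k\<in>Small. 10 / sqrt (real T) * measure out {k})"
        by (intro sum_mono mult_right_mono) (auto simp: Small_def)
      also have "\<dots> = 10 / sqrt (real T) * measure out Small"
        using O.finite_measure_eq_sum_singleton[OF split(4)] by (simp add: sets_out sum_distrib_left)
      also have "\<dots> \<le> 10 / sqrt (real T) * 1" by (intro mult_left_mono O.prob_le_1) simp
      finally show ?thesis using False by simp
    qed simp
  qed
  also have "(if Small \<noteq> {} then 1 else 0) =
      (if \<exists>k. k < K \<and> k \<noteq> kstar \<and> \<Delta> k < 10 / sqrt (real T) then 1 else (0::real))"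
    by (simp add: Small_def)
  also have "(\<Sum>k\<in>Big. \<Delta> k * bound k) = 2 * real K ^ 2 * (\<Sum>k\<in>Big. \<Delta> k * log 2 (20 / \<Delta> k) *
      exp (- real T / (2 * Max (Hterm K MM c B \<Delta> ` {l. l < K \<and> \<Delta> l \<ge> \<Delta> k}) * hn)))"
    by (simp add: bound_def sum_distrib_left algebra_simps)
  finally show ?thesis unfolding Big_def .
qed

end
theorem theorem5:
  fixes K :: nat
    and q :: "'p::finite pmf"
    and P :: "nat \<Rightarrow> 'p \<Rightarrow> 'v::finite pmf"
    and Yk :: "'v \<Rightarrow> 'p \<Rightarrow> real measure"
    and c :: "nat \<Rightarrow> real" and B :: real
    and nu :: "nat set \<Rightarrow> nat \<Rightarrow> real"
    and T :: nat and kstar :: nat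
  defines "\<mu> \<equiv> arm_mean q P Yk"
      and "M \<equiv> Mdiv q P"
  defines "\<Delta> \<equiv> (\<lambda>k. \<mu> kstar - \<mu> k)"
  defines "Hbar_k \<equiv> (\<lambda>k. Max (Hterm K M c B \<Delta> ` {l. l < K \<and> \<Delta> l \<ge> \<Delta> k}))"
      and "Hbar \<equiv> Max (Hterm K M c B \<Delta> ` {k. k < K \<and> k \<noteq> kstar})"
      and "Dmin \<equiv> Min (\<Delta> ` {k. k < K \<and> k \<noteq> kstar})"
      and "out \<equiv> sris_output K q P Yk nu T"
  assumes Yk: "\<And>v p. prob_space (Yk v p) \<and> sets (Yk v p) = sets borel \<and>
                 (AE y in Yk v p. 0 \<le> y \<and> y \<le> 1)"
      and abs_cont: "\<And>k j p v. k < K \<Longrightarrow> j < K \<Longrightarrow> p \<in> set_pmf q \<Longrightarrow>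
                 (pmf (P k p) v > 0 \<longleftrightarrow> pmf (P j p) v > 0)"
      and costs: "\<And>i. i < K \<Longrightarrow> 0 \<le> c i"
      and feas: "\<exists>\<nu>. feasible K c B \<nu>"
      and nu: "\<And>R. R \<noteq> {} \<Longrightarrow> R \<subseteq> {..<K} \<Longrightarrow> is_alloc_maximizer K M c B R (nu R)"
      and T: "0 < T"
      and best: "kstar < K" "\<And>k. k < K \<Longrightarrow> k \<noteq> kstar \<Longrightarrow> \<mu> k < \<mu> kstar"
  shows "((\<Sum>k\<in>{k. k < K \<and> k \<noteq> kstar}. \<Delta> k * measure out {k})
           \<le> 2 * real K ^ 2 *
              (\<Sum>k\<in>{k. k < K \<and> k \<noteq> kstar \<and> \<Delta> k \<ge> 10 / sqrt (real T)}.
                  \<Delta> k * log 2 (20 / \<Delta> k) *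
                  exp (- real T / (2 * Hbar_k k * hlog (n_phases T))))
             + 10 / sqrt (real T) *
               (if \<exists>k. k < K \<and> k \<noteq> kstar \<and> \<Delta> k < 10 / sqrt (real T) then 1 else 0))
         \<and> (2 \<le> K \<longrightarrow> (\<forall>k. k < K \<and> k \<noteq> kstar \<longrightarrow> \<Delta> k \<ge> 10 / sqrt (real T)) \<longrightarrow>
           measure out (UNIV - {kstar})
             \<le> 2 * real K ^ 2 * log 2 (20 / Dmin) *
                exp (- real T / (2 * Hbar * hlog (n_phases T))))"
proof -
  have nu': "\<And>R. R \<noteq> {} \<Longrightarrow> R \<subseteq> {..<K} \<Longrightarrow> is_alloc_maximizer K (Mdiv q P) c B R (nu R)"
    using nu unfolding M_def .
  have best': "\<And>k. k < K \<Longrightarrow> k \<noteq> kstar \<Longrightarrow> arm_mean q P Yk k < arm_mean q P Yk kstar"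
    using best(2) unfolding \<mu>_def .
  interpret S: sris_setting K q P Yk c B nu T kstar
    by (rule sris_setting.intro[OF Yk abs_cont nu' T best(1) best'])
  have \<Delta>_eq: "\<Delta> = S.\<Delta>" by (simp add: fun_eq_iff \<Delta>_def \<mu>_def S.\<Delta>_def)
  show ?thesis
    unfolding \<Delta>_eq Hbar_k_def Hbar_def Dmin_def out_def M_def
    by (intro conjI impI S.regret_le S.measure_out_not_best_le) auto
qed

end
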